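(* For every $\alpha\in\{9\beta\mid\beta\in\{57,58,60,61,64,66,69,70,73,76,78,82,84,85,88,93,94,96,100,106,109,114,121,133,138,157,253\}\}$ there exists a quaternary near-extremal Hermitian self-dual code of length $24$ whose weight enumerator is $1+\alpha y^{8}+(18216-8\alpha)y^{10}+(156492+28\alpha)y^{12}+(1147608-56\alpha)y^{14}+(3736557+70\alpha)y^{16}+(6248088-56\alpha)y^{18}+(4399164+28\alpha)y^{20}+(1038312-8\alpha)y^{22}+(32778+\alpha)y^{24}$.
   Context: Let $\mathbb{F}_4=\{0,1,\omega,\omega^2\}$ with $\omega^2=\omega+1$. A quaternary code of length $n$ is a linear subspace of $\mathbb{F}_4^n$; it is Hermitian self-dual if it equals its dual with respect to $\langle x,y\rangle_H=\sum_k x_k y_k^2$. The weight of a vector is the number of nonzero coordinates; the weight enumerator of $D$ is $\sum_{c\in D}y^{\mathrm{wt}(c)}$. A quaternary Hermitian self-dual code of length $24$ is near-extremal if its minimum nonzero weight is $8$. *)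

theory Defs
  imports "HOL-Computational_Algebra.Polynomial"
begin

text \<open>The field F_4 = {0,1,w,w^2} with w^2 = w + 1.\<close>
datatype F4 = F0 | F1 | Fw | Fw2

fun f4_add :: "F4 \<Rightarrow> F4 \<Rightarrow> F4" where
  "f4_add F0 y = y"
| "f4_add x F0 = x"
| "f4_add F1 F1 = F0" | "f4_add F1 Fw = Fw2" | "f4_add F1 Fw2 = Fw"
| "f4_add Fw F1 = Fw2" | "f4_add Fw Fw = F0" | "f4_add Fw Fw2 = F1"
| "f4_add Fw2 F1 = Fw" | "f4_add Fw2 Fw = F1" | "f4_add Fw2 Fw2 = F0"

fun f4_mul :: "F4 \<Rightarrow> F4 \<Rightarrow> F4" where
  "f4_mul F0 y = F0"
| "f4_mul x F0 = F0"
| "f4_mul F1 y = y"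
| "f4_mul x F1 = x"
| "f4_mul Fw Fw = Fw2" | "f4_mul Fw Fw2 = F1"
| "f4_mul Fw2 Fw = F1" | "f4_mul Fw2 Fw2 = Fw"

definition f4_sq :: "F4 \<Rightarrow> F4" where "f4_sq x = f4_mul x x"

definition vadd :: "F4 list \<Rightarrow> F4 list \<Rightarrow> F4 list" where
  "vadd x y = map2 f4_add x y"

definition smul :: "F4 \<Rightarrow> F4 list \<Rightarrow> F4 list" where
  "smul a x = map (f4_mul a) x"

definition zero_word :: "nat \<Rightarrow> F4 list" where
  "zero_word n = replicate n F0"

definition quaternary_code :: "nat \<Rightarrow> F4 list set \<Rightarrow> bool" where
  "quaternary_code n D \<longleftrightarrow> D \<subseteq> {x. length x = n} \<and> zero_word n \<in> D \<and>
     (\<forall>x\<in>D. \<forall>y\<in>D. vadd x y \<in> D) \<and> (\<forall>a. \<forall>x\<in>D. smul a x \<in> D)"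

definition herm_ip :: "F4 list \<Rightarrow> F4 list \<Rightarrow> F4" where
  "herm_ip x y = foldr f4_add (map2 (\<lambda>a b. f4_mul a (f4_sq b)) x y) F0"

definition herm_dual :: "nat \<Rightarrow> F4 list set \<Rightarrow> F4 list set" where
  "herm_dual n D = {y. length y = n \<and> (\<forall>x\<in>D. herm_ip x y = F0)}"

definition herm_self_dual :: "nat \<Rightarrow> F4 list set \<Rightarrow> bool" where
  "herm_self_dual n D \<longleftrightarrow> quaternary_code n D \<and> D = herm_dual n D"

definition wt :: "F4 list \<Rightarrow> nat" where
  "wt x = length (filter (\<lambda>a. a \<noteq> F0) x)"

definition min_weight :: "nat \<Rightarrow> F4 list set \<Rightarrow> nat" where
  "min_weight n D = Min (wt ` (D - {zero_word n}))"

definition weight_enumerator :: "F4 list set \<Rightarrow> int poly" where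
  "weight_enumerator D = (\<Sum>c\<in>D. monom 1 (wt c))"

definition near_extremal_24 :: "F4 list set \<Rightarrow> bool" where
  "near_extremal_24 D \<longleftrightarrow> herm_self_dual 24 D \<and> min_weight 24 D = 8"

end

theory Submission
  imports Defs "HOL-Library.Product_Plus"
begin

text \<open>Each code is a systematic code \<open>[I | A]\<close> whose redundancy part \<open>A\<close> is a unitary
  \<open>12 \<times> 12\<close> matrix over \<open>F\<^sub>4\<close> (\<open>A A\<^sup>* = A\<^sup>* A = I\<close> for the conjugate transpose \<open>A\<^sup>*\<close>);
  unitarity makes the code Hermitian self-dual. In a Hermitian self-dual code of length 24 all
  weights are even and the MacWilliams identity gives \<open>|D|\<^sup>2 = 4\<^sup>2\<^sup>4\<close>; if moreover no nonzero
  codeword has weight below 8, the identity evaluated at eight points determines the whole weight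
  enumerator from the number \<open>\<alpha>\<close> of codewords of weight 8. That a given \<open>A\<close> has no light
  codewords and exactly \<open>\<alpha>\<close> of weight 8 is checked by evaluation: a codeword \<open>m @ m A\<close> of weight
  at most 8 has \<open>wt m \<le> 4\<close>, or else its check part \<open>t = m A\<close> has weight at most 3 and determines
  \<open>m = t A\<^sup>*\<close>; so it suffices to enumerate the combinations of at most 4 rows of \<open>A\<close> and of at
  most 3 rows of \<open>A\<^sup>*\<close>.\<close>

section \<open>The field with four elements\<close>

fun f4_inv :: "F4 \<Rightarrow> F4" where
  "f4_inv F0 = F0" | "f4_inv F1 = F1" | "f4_inv Fw = Fw2" | "f4_inv Fw2 = Fw"

lemma UNIV_F4: "(UNIV :: F4 set) = {F0, F1, Fw, Fw2}"
  using F4.exhaust by auto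

instance F4 :: finite
  by standard (simp add: UNIV_F4)

instantiation F4 :: field
begin

definition "0 = F0"
definition "1 = F1"
definition "x + y = f4_add x y"
definition "x - y = f4_add x y"
definition "- x = (x :: F4)"
definition "x * y = f4_mul x y"
definition "inverse x = f4_inv x"
definition "x div y = f4_mul x (f4_inv y)"

instance
proof
  fix a b c :: F4
  show "a * b * c = a * (b * c)" by (cases a; cases b; cases c; simp add: times_F4_def)
  show "a * b = b * a" by (cases a; cases b; simp add: times_F4_def)
  show "1 * a = a" by (cases a; simp add: times_F4_def one_F4_def)
  show "a + b + c = a + (b + c)" by (cases a; cases b; cases c; simp add: plus_F4_def)
  show "a + b = b + a" by (cases a; cases b; simp add: plus_F4_def)
  show "0 + a = a" by (cases a; simp add: plus_F4_def zero_F4_def)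
  show "- a + a = 0" by (cases a; simp add: plus_F4_def zero_F4_def uminus_F4_def)
  show "a - b = a + - b" by (simp add: plus_F4_def minus_F4_def uminus_F4_def)
  show "(a + b) * c = a * c + b * c"
    by (cases a; cases b; cases c; simp add: plus_F4_def times_F4_def)
  show "(0::F4) \<noteq> 1" by (simp add: zero_F4_def one_F4_def)
  show "a \<noteq> 0 \<Longrightarrow> inverse a * a = 1"
    by (cases a; simp add: zero_F4_def one_F4_def inverse_F4_def times_F4_def)
  show "a div b = a * inverse b" by (simp add: divide_F4_def inverse_F4_def times_F4_def)
  show "inverse (0::F4) = 0" by (simp add: zero_F4_def inverse_F4_def)
qed

end

lemma F0_eq_zero: "F0 = 0" and F1_eq_one: "F1 = 1"
  by (simp_all add: zero_F4_def one_F4_def)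

lemma F4_nonzero [simp]: "F1 \<noteq> 0" "Fw \<noteq> 0" "Fw2 \<noteq> 0"
  by (simp_all add: zero_F4_def)

lemma f4_add_self [simp]: "(x :: F4) + x = 0"
  by (cases x) (simp_all add: plus_F4_def zero_F4_def)

lemma f4_add_eq_0_iff: "(x :: F4) + y = 0 \<longleftrightarrow> x = y"
  by (cases x; cases y) (simp_all add: plus_F4_def zero_F4_def)

lemma sum_UNIV_F4: "(\<Sum>a\<in>UNIV. f a) = f F0 + f F1 + f Fw + f Fw2"
  by (simp add: UNIV_F4 add.assoc)

text \<open>Squaring is the Frobenius automorphism, i.e. the conjugation of \<open>F\<^sub>4\<close> over \<open>F\<^sub>2\<close>.\<close>

lemma f4_sq_add: "f4_sq (x + y) = f4_sq x + f4_sq y"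
  by (cases x; cases y) (simp_all add: f4_sq_def plus_F4_def zero_F4_def)

lemma f4_sq_mult: "f4_sq (x * y) = f4_sq x * f4_sq y"
  by (cases x; cases y) (simp_all add: f4_sq_def times_F4_def)

lemma f4_sq_f4_sq [simp]: "f4_sq (f4_sq x) = x"
  by (cases x) (simp_all add: f4_sq_def)

lemma f4_sq_0 [simp]: "f4_sq 0 = 0"
  by (simp add: f4_sq_def zero_F4_def)

lemma mult_f4_sq_self: "x * f4_sq x = (if x = 0 then 0 else 1)"
  by (cases x) (simp_all add: f4_sq_def times_F4_def zero_F4_def one_F4_def)

lemma f4_sq_sum: "f4_sq (\<Sum>i\<in>I. f i) = (\<Sum>i\<in>I. f4_sq (f i))"
  by (induction I rule: infinite_finite_induct) (simp_all add: f4_sq_add)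

lemma f4_add_eq_plus [simp]: "f4_add x y = x + y"
  by (simp add: plus_F4_def)

lemma f4_mul_eq_times [simp]: "f4_mul x y = x * y"
  by (simp add: times_F4_def)

text \<open>The additive character \<open>a \<mapsto> (-1)^Tr(a)\<close>, with trace \<open>Tr(a) = a + a^2\<close> in \<open>F\<^sub>2\<close>.\<close>

definition f4_char :: "F4 \<Rightarrow> int" where
  "f4_char a = (if a = 0 \<or> a = 1 then 1 else -1)"

lemma f4_char_add: "f4_char (a + b) = f4_char a * f4_char b"
  by (cases a; cases b)
    (simp_all add: f4_char_def plus_F4_def zero_F4_def one_F4_def del: f4_add_eq_plus)

lemma f4_char_0 [simp]: "f4_char 0 = 1" and f4_char_Fw [simp]: "f4_char Fw = -1"
  by (simp_all add: f4_char_def zero_F4_def one_F4_def)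

lemma sum_f4_char: "(\<Sum>b\<in>UNIV. f4_char (a * f4_sq b) * t ^ (if b = 0 then 0 else 1)) =
    (if a = 0 then 1 + 3 * t else 1 - (t :: int))"
  by (cases a) (simp_all add: sum_UNIV_F4 f4_char_def f4_sq_def times_F4_def zero_F4_def one_F4_def
      del: f4_mul_eq_times)

section \<open>Words and the Hermitian inner product\<close>

definition words :: "nat \<Rightarrow> F4 list set" where
  "words n = {x. length x = n}"

lemma finite_words [simp]: "finite (words n)"
  using finite_lists_length_eq[of "UNIV :: F4 set" n] by (simp add: words_def)

lemma words_0: "words 0 = {[]}"
  by (auto simp: words_def)

lemma sum_words_Suc: "(\<Sum>x\<in>words (Suc n). f x) = (\<Sum>a\<in>UNIV. \<Sum>x\<in>words n. f (a # x))"
proof -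
  have "words (Suc n) = (\<lambda>(a, x). a # x) ` (UNIV \<times> words n)"
    by (auto simp: words_def image_iff length_Suc_conv)
  moreover have "inj_on (\<lambda>(a, x). a # x) (UNIV \<times> words n)"
    by (auto simp: inj_on_def)
  ultimately show ?thesis
    by (simp add: sum.reindex case_prod_unfold sum.cartesian_product)
qed

lemma zero_word_0 [simp]: "zero_word 0 = []"
  by (simp add: zero_word_def)

lemma zero_word_Suc: "zero_word (Suc n) = 0 # zero_word n"
  by (simp add: zero_word_def F0_eq_zero)

lemma length_zero_word [simp]: "length (zero_word n) = n"
  by (simp add: zero_word_def)

lemma nth_zero_word [simp]: "i < n \<Longrightarrow> zero_word n ! i = 0"
  by (simp add: zero_word_def F0_eq_zero)

lemma zero_word_in_words [simp]: "zero_word n \<in> words n"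
  by (simp add: words_def)

lemma append_eq_zero_word_iff:
  "length x = m \<Longrightarrow> x @ y = zero_word (m + length y) \<longleftrightarrow> x = zero_word m \<and> y = zero_word (length y)"
  by (auto simp: zero_word_def replicate_add)

text \<open>Pattern-matching code equations, which \<open>code_simp\<close> evaluates much faster than the
  definitions by \<open>map2\<close> and \<open>filter\<close>.\<close>

lemma vadd_code [code]:
  "vadd (a # x) (b # y) = f4_add a b # vadd x y" "vadd [] y = []" "vadd (a # x) [] = []"
  by (simp_all add: vadd_def)

lemma smul_code [code]: "smul c [] = []" "smul c (a # x) = f4_mul c a # smul c x"
  by (simp_all add: smul_def)

lemma wt_code [code]: "wt [] = 0" "wt (a # x) = (if a = F0 then wt x else Suc (wt x))"
  by (simp_all add: wt_def)

lemma vadd_Cons [simp]: "vadd (a # x) (b # y) = (a + b) # vadd x y"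
  by (simp add: vadd_def)

lemma smul_Nil [simp]: "smul c [] = []" and smul_Cons [simp]: "smul c (a # x) = c * a # smul c x"
  by (simp_all add: smul_def)

lemma length_vadd [simp]: "length (vadd x y) = min (length x) (length y)"
  by (simp add: vadd_def)

lemma length_smul [simp]: "length (smul a x) = length x"
  by (simp add: smul_def)

lemma nth_vadd [simp]: "i < length x \<Longrightarrow> i < length y \<Longrightarrow> vadd x y ! i = x ! i + y ! i"
  by (simp add: vadd_def)

lemma nth_smul [simp]: "i < length x \<Longrightarrow> smul a x ! i = a * x ! i"
  by (simp add: smul_def)

lemma vadd_append: "length x = length x' \<Longrightarrow> vadd (x @ y) (x' @ y') = vadd x x' @ vadd y y'"
  by (simp add: vadd_def)

lemma smul_append: "smul a (x @ y) = smul a x @ smul a y"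
  by (simp add: smul_def)

lemma vadd_zero_word_left: "length x = n \<Longrightarrow> vadd (zero_word n) x = x"
  by (simp add: list_eq_iff_nth_eq)

lemma vadd_zero_word_right: "length x = n \<Longrightarrow> vadd x (zero_word n) = x"
  by (simp add: list_eq_iff_nth_eq)

lemma vadd_assoc:
  "length x = length y \<Longrightarrow> length y = length z \<Longrightarrow> vadd (vadd x y) z = vadd x (vadd y z)"
  by (simp add: list_eq_iff_nth_eq add.assoc)

lemma vadd_vadd_cancel: "length x = length y \<Longrightarrow> vadd (vadd x y) y = x"
  by (simp add: list_eq_iff_nth_eq add.assoc)

lemma smul_zero: "smul 0 x = zero_word (length x)"
  by (simp add: list_eq_iff_nth_eq)

lemma smul_one: "smul 1 x = x"
  by (simp add: list_eq_iff_nth_eq)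

lemma smul_smul: "smul a (smul b x) = smul (a * b) x"
  by (simp add: list_eq_iff_nth_eq mult.assoc)

lemma smul_vadd: "smul c (vadd x y) = vadd (smul c x) (smul c y)"
  by (simp add: list_eq_iff_nth_eq algebra_simps)

lemma smul_eq_zero_word_iff: "c \<noteq> 0 \<Longrightarrow> length x = n \<Longrightarrow> smul c x = zero_word n \<longleftrightarrow> x = zero_word n"
  by (auto simp: list_eq_iff_nth_eq)

lemma wt_Nil [simp]: "wt [] = 0"
  by (simp add: wt_def)

lemma wt_Cons [simp]: "wt (a # x) = (if a = 0 then wt x else Suc (wt x))"
  by (simp add: wt_def F0_eq_zero)

lemma wt_append [simp]: "wt (x @ y) = wt x + wt y"
  by (simp add: wt_def)

lemma wt_le_length: "wt x \<le> length x"
  by (simp add: wt_def)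

lemma wt_zero_word [simp]: "wt (zero_word n) = 0"
  by (simp add: zero_word_def wt_def)

lemma wt_eq_0_iff: "wt x = 0 \<longleftrightarrow> x = zero_word (length x)"
  by (induction x) (auto simp: zero_word_Suc)

lemma wt_smul: "c \<noteq> 0 \<Longrightarrow> wt (smul c x) = wt x"
  by (induction x) auto

lemma herm_ip_Cons [simp]: "herm_ip (a # x) (b # y) = a * f4_sq b + herm_ip x y"
  by (simp add: herm_ip_def)

lemma herm_ip_append:
  "length x = length x' \<Longrightarrow> herm_ip (x @ y) (x' @ y') = herm_ip x x' + herm_ip y y'"
  by (induction x x' rule: list_induct2) (simp_all add: herm_ip_def F0_eq_zero add.assoc)

lemma herm_ip_eq_sum:
  "length x = length y \<Longrightarrow> herm_ip x y = (\<Sum>i<length x. x ! i * f4_sq (y ! i))"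
  by (induction x y rule: list_induct2)
    (simp_all add: herm_ip_def F0_eq_zero sum.lessThan_Suc_shift del: sum.lessThan_Suc)

lemma herm_ip_vadd_left:
  "length x = length z \<Longrightarrow> length y = length z \<Longrightarrow> herm_ip (vadd x y) z = herm_ip x z + herm_ip y z"
  by (simp add: herm_ip_eq_sum sum.distrib algebra_simps)

lemma herm_ip_smul_left: "length x = length y \<Longrightarrow> herm_ip (smul a x) y = a * herm_ip x y"
  by (simp add: herm_ip_eq_sum sum_distrib_left algebra_simps)

lemma herm_ip_self: "herm_ip x x = (if even (wt x) then 0 else 1)"
  by (induction x) (auto simp: herm_ip_def F0_eq_zero mult_f4_sq_self)

section \<open>Systematic codes with a unitary redundancy matrix\<close>

text \<open>Matrices are lists of rows. \<open>lincomb n A m\<close> is the vector-matrix product \<open>m A\<close>; the row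
  length \<open>n\<close> is needed for the value of an empty combination.\<close>

fun lincomb :: "nat \<Rightarrow> F4 list list \<Rightarrow> F4 list \<Rightarrow> F4 list" where
  "lincomb n (r # rs) (a # m) = vadd (smul a r) (lincomb n rs m)"
| "lincomb n _ _ = zero_word n"

definition square_mat :: "F4 list list \<Rightarrow> bool" where
  "square_mat A \<longleftrightarrow> set A \<subseteq> words (length A)"

lemma square_mat_code [code]: "square_mat A \<longleftrightarrow> (\<forall>r\<in>set A. length r = length A)"
  by (auto simp: square_mat_def words_def)

definition adjoint :: "F4 list list \<Rightarrow> F4 list list" where
  "adjoint A = map (\<lambda>j. map (\<lambda>r. f4_sq (r ! j)) A) [0..<length A]"

definition orthonormal_rows :: "F4 list list \<Rightarrow> bool" where
  "orthonormal_rows A \<longleftrightarrow>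
     (\<forall>i<length A. \<forall>l<length A. herm_ip (A ! i) (A ! l) = (if i = l then 1 else 0))"

definition unitary :: "F4 list list \<Rightarrow> bool" where
  "unitary A \<longleftrightarrow> square_mat A \<and> orthonormal_rows A \<and> orthonormal_rows (adjoint A)"

definition systematic_code :: "F4 list list \<Rightarrow> F4 list set" where
  "systematic_code A = (\<lambda>m. m @ lincomb (length A) A m) ` words (length A)"

lemma length_lincomb [simp]: "set rs \<subseteq> words n \<Longrightarrow> length (lincomb n rs m) = n"
  by (induction n rs m rule: lincomb.induct) (auto simp: words_def)

lemma nth_lincomb:
  "length m = length rs \<Longrightarrow> set rs \<subseteq> words n \<Longrightarrow> j < n \<Longrightarrow>
     lincomb n rs m ! j = (\<Sum>i<length m. m ! i * rs ! i ! j)"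
  by (induction m rs rule: list_induct2)
    (simp_all add: words_def sum.lessThan_Suc_shift del: sum.lessThan_Suc)

lemma lincomb_vadd:
  "set A \<subseteq> words n \<Longrightarrow> length m = length A \<Longrightarrow> length m' = length A \<Longrightarrow>
     lincomb n A (vadd m m') = vadd (lincomb n A m) (lincomb n A m')"
  by (simp add: list_eq_iff_nth_eq nth_lincomb sum.distrib algebra_simps)

lemma lincomb_smul:
  "set A \<subseteq> words n \<Longrightarrow> length m = length A \<Longrightarrow> lincomb n A (smul a m) = smul a (lincomb n A m)"
  by (simp add: list_eq_iff_nth_eq nth_lincomb sum_distrib_left algebra_simps)

lemma lincomb_zero_word: "set A \<subseteq> words n \<Longrightarrow> lincomb n A (zero_word (length A)) = zero_word n"
  by (simp add: list_eq_iff_nth_eq nth_lincomb)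

lemma length_nth_square_mat: "square_mat A \<Longrightarrow> i < length A \<Longrightarrow> length (A ! i) = length A"
  unfolding square_mat_def words_def by (metis (mono_tags) mem_Collect_eq nth_mem subsetD)

lemma length_adjoint [simp]: "length (adjoint A) = length A"
  by (simp add: adjoint_def)

lemma square_mat_adjoint: "square_mat (adjoint A)"
  by (auto simp: square_mat_def adjoint_def words_def)

lemma nth_nth_adjoint: "j < length A \<Longrightarrow> i < length A \<Longrightarrow> adjoint A ! j ! i = f4_sq (A ! i ! j)"
  by (simp add: adjoint_def)

lemma adjoint_adjoint:
  assumes "square_mat A"
  shows "adjoint (adjoint A) = A"
proof (rule nth_equalityI)
  fix j assume j: "j < length (adjoint (adjoint A))"
  show "adjoint (adjoint A) ! j = A ! j"
  proof (rule nth_equalityI)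
    show "length (adjoint (adjoint A) ! j) = length (A ! j)"
      using assms j by (simp add: adjoint_def length_nth_square_mat)
    fix i assume "i < length (adjoint (adjoint A) ! j)"
    then show "adjoint (adjoint A) ! j ! i = A ! j ! i"
      using j by (simp add: adjoint_def)
  qed
qed simp

lemma orthonormal_rows_iff:
  "square_mat A \<Longrightarrow> orthonormal_rows A \<longleftrightarrow>
     (\<forall>i<length A. \<forall>l<length A.
        (\<Sum>j<length A. A ! i ! j * f4_sq (A ! l ! j)) = (if i = l then 1 else 0))"
  by (simp add: orthonormal_rows_def herm_ip_eq_sum length_nth_square_mat)

lemma sum_delta_right:
  "j < (k :: nat) \<Longrightarrow> (\<Sum>i<k. f i * (if i = j then 1 else (0 :: 'a::semiring_1))) = f j"
  by (simp add: if_distrib cong: if_cong)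

lemma sum_delta_left:
  "j < (k :: nat) \<Longrightarrow> (\<Sum>i<k. (if i = j then 1 else (0 :: 'a::comm_semiring_1)) * f i) = f j"
  using sum_delta_right[of j k f] by (simp add: mult.commute)

lemma sum_mult_sum_swap:
  "(\<Sum>i<k. (\<Sum>l<k. x l * P l i) * Q i) = (\<Sum>l<k. x l * (\<Sum>i<k. P l i * (Q i :: 'a::semiring_0)))"
proof -
  have "(\<Sum>i<k. (\<Sum>l<k. x l * P l i) * Q i) = (\<Sum>i<k. \<Sum>l<k. x l * (P l i * Q i))"
    by (simp add: sum_distrib_right mult.assoc)
  also have "\<dots> = (\<Sum>l<k. \<Sum>i<k. x l * (P l i * Q i))"
    by (rule sum.swap)
  finally show ?thesis
    by (simp add: sum_distrib_left)
qed

lemma herm_ip_lincomb: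
  assumes A: "square_mat A" "orthonormal_rows A" and m: "length m = length A" "length m' = length A"
  shows "herm_ip (lincomb (length A) A m) (lincomb (length A) A m') = herm_ip m m'"
proof -
  let ?k = "length A"
  have "herm_ip (lincomb ?k A m) (lincomb ?k A m') =
      (\<Sum>j<?k. (\<Sum>i<?k. m ! i * A ! i ! j) * f4_sq (\<Sum>l<?k. m' ! l * A ! l ! j))"
    using A m by (simp add: square_mat_def herm_ip_eq_sum nth_lincomb)
  also have "\<dots> = (\<Sum>j<?k. \<Sum>l<?k. \<Sum>i<?k. (m ! i * f4_sq (m' ! l)) * (A ! i ! j * f4_sq (A ! l ! j)))"
    by (simp add: f4_sq_sum f4_sq_mult sum_distrib_left sum_distrib_right algebra_simps)
  also have "\<dots> = (\<Sum>l<?k. \<Sum>i<?k. \<Sum>j<?k. (m ! i * f4_sq (m' ! l)) * (A ! i ! j * f4_sq (A ! l ! j)))"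
    by (subst sum.swap) (rule sum.cong[OF refl], rule sum.swap)
  also have "\<dots> = (\<Sum>l<?k. \<Sum>i<?k. (m ! i * f4_sq (m' ! l)) * (\<Sum>j<?k. A ! i ! j * f4_sq (A ! l ! j)))"
    by (simp add: sum_distrib_left)
  also have "\<dots> = (\<Sum>l<?k. m ! l * f4_sq (m' ! l))"
    using A by (simp add: orthonormal_rows_iff sum_delta_right)
  also have "\<dots> = herm_ip m m'"
    using m by (simp add: herm_ip_eq_sum)
  finally show ?thesis .
qed

lemma lincomb_adjoint_lincomb:
  assumes A: "square_mat A" "orthonormal_rows A" and m: "length m = length A"
  shows "lincomb (length A) (adjoint A) (lincomb (length A) A m) = m"
proof (rule nth_equalityI)
  let ?k = "length A"
  have rows: "set A \<subseteq> words ?k" "set (adjoint A) \<subseteq> words ?k"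
    using A(1) square_mat_adjoint[of A] by (simp_all add: square_mat_def)
  then show "length (lincomb ?k (adjoint A) (lincomb ?k A m)) = length m"
    using m by simp
  fix j assume "j < length (lincomb ?k (adjoint A) (lincomb ?k A m))"
  then have j: "j < ?k" using rows by simp
  have "lincomb ?k (adjoint A) (lincomb ?k A m) ! j =
      (\<Sum>i<?k. (\<Sum>l<?k. m ! l * A ! l ! i) * f4_sq (A ! j ! i))"
    using rows m j by (simp add: nth_lincomb nth_nth_adjoint)
  also have "\<dots> = (\<Sum>l<?k. m ! l * (\<Sum>i<?k. A ! l ! i * f4_sq (A ! j ! i)))"
    by (rule sum_mult_sum_swap)
  also have "\<dots> = m ! j"
    using A j by (simp add: orthonormal_rows_iff sum_delta_right)
  finally show "lincomb ?k (adjoint A) (lincomb ?k A m) ! j = m ! j" .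
qed

lemma lincomb_lincomb_adjoint:
  assumes "unitary A" and "length t = length A"
  shows "lincomb (length A) A (lincomb (length A) (adjoint A) t) = t"
  using lincomb_adjoint_lincomb[of "adjoint A" t] assms
  by (simp add: unitary_def square_mat_adjoint adjoint_adjoint)

lemma sum_systematic_code:
  "(\<Sum>c\<in>systematic_code A. f c) = (\<Sum>m\<in>words (length A). f (m @ lincomb (length A) A m))"
proof -
  have "inj_on (\<lambda>m. m @ lincomb (length A) A m) (words (length A))"
    by (auto simp: inj_on_def words_def)
  then show ?thesis
    unfolding systematic_code_def by (simp add: sum.reindex)
qed

lemma finite_systematic_code [simp]: "finite (systematic_code A)"
  by (simp add: systematic_code_def)

lemma quaternary_code_systematic_code:
  assumes "square_mat A"
  shows "quaternary_code (2 * length A) (systematic_code A)"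
proof -
  let ?k = "length A" and ?enc = "\<lambda>m. m @ lincomb (length A) A m"
  have rows: "set A \<subseteq> words ?k" using assms by (simp add: square_mat_def)
  have "systematic_code A \<subseteq> {x. length x = 2 * ?k}"
    using rows by (auto simp: systematic_code_def words_def)
  moreover have "zero_word (2 * ?k) = ?enc (zero_word ?k)"
    using lincomb_zero_word[OF rows] by (simp add: zero_word_def mult_2 replicate_add)
  moreover have "vadd (?enc m) (?enc m') = ?enc (vadd m m')" "smul a (?enc m) = ?enc (smul a m)"
    if "m \<in> words ?k" "m' \<in> words ?k" for m m' a
    using rows that by (simp_all add: words_def vadd_append smul_append lincomb_vadd lincomb_smul)
  moreover have "vadd m m' \<in> words ?k" "smul a m \<in> words ?k"
    if "m \<in> words ?k" "m' \<in> words ?k" for m m' a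
    using that by (simp_all add: words_def)
  ultimately show ?thesis
    unfolding quaternary_code_def systematic_code_def by (auto simp del: smul_Cons)
qed

definition unit_word :: "nat \<Rightarrow> nat \<Rightarrow> F4 list" where
  "unit_word k i = map (\<lambda>j. if j = i then 1 else 0) [0..<k]"

lemma length_unit_word [simp]: "length (unit_word k i) = k"
  by (simp add: unit_word_def)

lemma lincomb_unit_word:
  assumes "square_mat A" "i < length A"
  shows "lincomb (length A) A (unit_word (length A) i) = A ! i"
proof (rule nth_equalityI)
  have rows: "set A \<subseteq> words (length A)"
    using assms(1) by (simp add: square_mat_def)
  then show "length (lincomb (length A) A (unit_word (length A) i)) = length (A ! i)"
    using assms by (simp add: length_nth_square_mat)
  fix j assume "j < length (lincomb (length A) A (unit_word (length A) i))"
  then show "lincomb (length A) A (unit_word (length A) i) ! j = A ! i ! j"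
    using rows assms(2) by (simp add: nth_lincomb unit_word_def sum_delta_left)
qed

lemma herm_ip_unit_word: "i < length y \<Longrightarrow> herm_ip (unit_word (length y) i) y = f4_sq (y ! i)"
  by (simp add: herm_ip_eq_sum unit_word_def sum_delta_left)

text \<open>A word \<open>h @ t\<close> orthogonal to every row \<open>e\<^sub>i @ A\<^sub>i\<close> of the generator matrix \<open>[I | A]\<close>
  has \<open>h = t A\<^sup>*\<close>, hence \<open>t = h A\<close> when \<open>A\<^sup>* A = I\<close>.\<close>

lemma herm_dual_systematic_code_subset:
  assumes U: "unitary A"
  shows "herm_dual (2 * length A) (systematic_code A) \<subseteq> systematic_code A"
proof
  let ?k = "length A"
  have sq: "square_mat A" using U by (simp add: unitary_def)
  then have rows: "set A \<subseteq> words ?k" "set (adjoint A) \<subseteq> words ?k"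
    using square_mat_adjoint[of A] by (simp_all add: square_mat_def)
  fix y assume "y \<in> herm_dual (2 * ?k) (systematic_code A)"
  then have ly: "length y = 2 * ?k" and orth: "\<And>c. c \<in> systematic_code A \<Longrightarrow> herm_ip c y = 0"
    by (auto simp: herm_dual_def F0_eq_zero)
  define h t where "h = take ?k y" and "t = drop ?k y"
  have y: "y = h @ t" and lh: "length h = ?k" and lt: "length t = ?k"
    using ly by (simp_all add: h_def t_def)
  have "h ! i = lincomb ?k (adjoint A) t ! i" if i: "i < ?k" for i
  proof -
    have row: "unit_word ?k i @ A ! i \<in> systematic_code A"
      unfolding systematic_code_def
      by (rule image_eqI[where x = "unit_word ?k i"])
        (simp_all add: lincomb_unit_word[OF sq i] words_def)
    have lAi: "length (A ! i) = ?k" using length_nth_square_mat[OF sq i] .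
    have "f4_sq (h ! i) + herm_ip (A ! i) t = 0"
      using orth[OF row] herm_ip_unit_word[of i h] lh i lAi by (simp add: y herm_ip_append)
    then have "h ! i = f4_sq (herm_ip (A ! i) t)"
      by (metis f4_add_eq_0_iff f4_sq_f4_sq)
    also have "\<dots> = (\<Sum>l<?k. t ! l * adjoint A ! l ! i)"
      using lAi lt i by (simp add: herm_ip_eq_sum f4_sq_sum f4_sq_mult nth_nth_adjoint mult.commute)
    finally show ?thesis
      using rows lt i by (simp add: nth_lincomb)
  qed
  then have "h = lincomb ?k (adjoint A) t"
    using rows lh by (simp add: list_eq_iff_nth_eq)
  then have "t = lincomb ?k A h"
    using lincomb_lincomb_adjoint[OF U lt] by simp
  then show "y \<in> systematic_code A"
    using y lh by (auto simp: systematic_code_def words_def)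
qed

lemma systematic_code_subset_herm_dual:
  assumes "square_mat A" "orthonormal_rows A"
  shows "systematic_code A \<subseteq> herm_dual (2 * length A) (systematic_code A)"
proof
  let ?k = "length A"
  have rows: "set A \<subseteq> words ?k" using assms(1) by (simp add: square_mat_def)
  have orth: "herm_ip (m' @ lincomb ?k A m') (m @ lincomb ?k A m) = 0"
    if "length m' = ?k" "length m = ?k" for m m'
    using that assms by (simp add: herm_ip_append herm_ip_lincomb)
  fix c assume "c \<in> systematic_code A"
  then obtain m where m: "length m = ?k" "c = m @ lincomb ?k A m"
    by (auto simp: systematic_code_def words_def)
  then show "c \<in> herm_dual (2 * ?k) (systematic_code A)"
    using rows orth by (auto simp: herm_dual_def systematic_code_def words_def F0_eq_zero)
qed

theorem herm_self_dual_systematic_code: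
  assumes "unitary A"
  shows "herm_self_dual (2 * length A) (systematic_code A)"
  using assms quaternary_code_systematic_code systematic_code_subset_herm_dual
    herm_dual_systematic_code_subset
  unfolding herm_self_dual_def unitary_def by blast

section \<open>The MacWilliams identity and the weight distribution\<close>

lemma sum_f4_char_herm_ip_nonorth:
  assumes D: "quaternary_code n D" and v: "length v = n"
    and c0: "c0 \<in> D" "herm_ip c0 v \<noteq> 0"
  shows "(\<Sum>c\<in>D. f4_char (herm_ip c v)) = 0"
proof -
  have len: "\<And>c. c \<in> D \<Longrightarrow> length c = n"
    using D by (auto simp: quaternary_code_def)
  define c1 where "c1 = smul (Fw * inverse (herm_ip c0 v)) c0"
  have c1: "c1 \<in> D" "length c1 = n" "herm_ip c1 v = Fw"
    using D c0 len[OF c0(1)] v by (simp_all add: quaternary_code_def c1_def herm_ip_smul_left)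
  txt \<open>Translation by \<open>c\<^sub>1\<close> permutes \<open>D\<close> and flips the sign of every term.\<close>
  have "(\<Sum>c\<in>D. f4_char (herm_ip c v)) = (\<Sum>c\<in>D. f4_char (herm_ip (vadd c c1) v))"
    by (rule sum.reindex_bij_witness[where i = "\<lambda>c. vadd c c1" and j = "\<lambda>c. vadd c c1"])
      (use D c1 len in \<open>auto simp: vadd_vadd_cancel quaternary_code_def\<close>)
  also have "\<dots> = - (\<Sum>c\<in>D. f4_char (herm_ip c v))"
    using len c1 v by (simp add: herm_ip_vadd_left f4_char_add sum_negf)
  finally show ?thesis by simp
qed

lemma sum_words_f4_char_herm_ip:
  "(\<Sum>v\<in>words (length c). f4_char (herm_ip c v) * t ^ wt v) =
     (1 + 3 * t) ^ (length c - wt c) * (1 - t :: int) ^ wt c"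
proof (induction c)
  case Nil
  then show ?case by (simp add: words_0 herm_ip_def F0_eq_zero)
next
  case (Cons a c)
  have "(\<Sum>v\<in>words (length (a # c)). f4_char (herm_ip (a # c) v) * t ^ wt v) =
      (\<Sum>b\<in>UNIV. \<Sum>v\<in>words (length c).
        f4_char (a * f4_sq b) * t ^ (if b = 0 then 0 else 1) * (f4_char (herm_ip c v) * t ^ wt v))"
    by (simp add: sum_words_Suc f4_char_add) (intro sum.cong refl, simp add: algebra_simps)
  also have "\<dots> = (\<Sum>b\<in>UNIV. f4_char (a * f4_sq b) * t ^ (if b = 0 then 0 else 1)) *
      (\<Sum>v\<in>words (length c). f4_char (herm_ip c v) * t ^ wt v)"
    by (simp add: sum_product)
  also have "\<dots> = (1 + 3 * t) ^ (length (a # c) - wt (a # c)) * (1 - t) ^ wt (a # c)"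
    using wt_le_length[of c] by (simp add: sum_f4_char Cons.IH Suc_diff_le)
  finally show ?case .
qed

theorem macwilliams_identity:
  assumes D: "quaternary_code n D"
  shows "int (card D) * (\<Sum>v\<in>herm_dual n D. t ^ wt v) =
    (\<Sum>c\<in>D. (1 + 3 * t) ^ (n - wt c) * (1 - t :: int) ^ wt c)"
proof -
  have DV: "D \<subseteq> words n" using D by (auto simp: quaternary_code_def words_def)
  have inner: "(\<Sum>c\<in>D. f4_char (herm_ip c v)) = (if v \<in> herm_dual n D then int (card D) else 0)"
    if v: "v \<in> words n" for v
  proof (cases "v \<in> herm_dual n D")
    case True
    then show ?thesis by (simp add: herm_dual_def F0_eq_zero)
  next
    case False
    then obtain c0 where "c0 \<in> D" "herm_ip c0 v \<noteq> 0"
      using v by (auto simp: herm_dual_def words_def F0_eq_zero)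
    then show ?thesis
      using False sum_f4_char_herm_ip_nonorth[OF D] v by (simp add: words_def)
  qed
  have "(\<Sum>c\<in>D. (1 + 3 * t) ^ (n - wt c) * (1 - t) ^ wt c) =
      (\<Sum>c\<in>D. \<Sum>v\<in>words n. f4_char (herm_ip c v) * t ^ wt v)"
  proof (intro sum.cong refl)
    fix c assume "c \<in> D"
    then have "length c = n" using DV by (auto simp: words_def)
    then show "(1 + 3 * t) ^ (n - wt c) * (1 - t) ^ wt c =
        (\<Sum>v\<in>words n. f4_char (herm_ip c v) * t ^ wt v)"
      using sum_words_f4_char_herm_ip[of c t] by simp
  qed
  also have "\<dots> = (\<Sum>v\<in>words n. t ^ wt v * (\<Sum>c\<in>D. f4_char (herm_ip c v)))"
    by (subst sum.swap) (simp add: sum_distrib_left mult.commute)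
  also have "\<dots> = (\<Sum>v\<in>words n. if v \<in> herm_dual n D then int (card D) * t ^ wt v else 0)"
    by (intro sum.cong refl) (simp add: inner)
  also have "\<dots> = (\<Sum>v\<in>{v\<in>words n. v \<in> herm_dual n D}. int (card D) * t ^ wt v)"
    by (simp add: sum.inter_filter)
  also have "{v\<in>words n. v \<in> herm_dual n D} = herm_dual n D"
    by (auto simp: herm_dual_def words_def)
  finally show ?thesis
    by (simp add: sum_distrib_left)
qed

lemma wt_eq_0_iff_zero_word: "c \<in> words n \<Longrightarrow> wt c = 0 \<longleftrightarrow> c = zero_word n"
  unfolding words_def by (metis mem_Collect_eq wt_eq_0_iff)

text \<open>The identity at \<open>t = 1\<close>: only the zero word survives on the right.\<close>

lemma card_herm_self_dual:
  assumes SD: "herm_self_dual n D"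
  shows "card D ^ 2 = 4 ^ n"
proof -
  have D: "quaternary_code n D" and dual: "herm_dual n D = D"
    using SD by (simp_all add: herm_self_dual_def)
  have DV: "D \<subseteq> words n" and z: "zero_word n \<in> D"
    using D by (auto simp: quaternary_code_def words_def)
  have wt0: "wt c = 0 \<longleftrightarrow> c = zero_word n" if "c \<in> D" for c
    using wt_eq_0_iff_zero_word[OF subsetD[OF DV that]] .
  have "int (card D) * int (card D) = (\<Sum>c\<in>D. (1 + 3 * 1) ^ (n - wt c) * (1 - 1 :: int) ^ wt c)"
    using macwilliams_identity[OF D, of 1] dual by simp
  also have "\<dots> = (\<Sum>c\<in>D. if c = zero_word n then 4 ^ n else 0)"
    using wt0 by (intro sum.cong refl) auto
  also have "\<dots> = 4 ^ n"
    using z by (simp add: sum.delta finite_subset[OF DV])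
  finally have "int (card D ^ 2) = int (4 ^ n)"
    by (simp add: power2_eq_square)
  then show ?thesis
    by (simp only: of_nat_eq_iff)
qed

lemma even_wt_herm_self_dual:
  assumes "herm_self_dual n D" "c \<in> D"
  shows "even (wt c)"
proof -
  have "c \<in> herm_dual n D"
    using assms by (simp add: herm_self_dual_def)
  then have "herm_ip c c = 0"
    using assms(2) by (simp add: herm_dual_def F0_eq_zero)
  then show ?thesis
    using herm_ip_self[of c] by (simp split: if_splits)
qed

lemma sum_by_wt:
  assumes "finite D" "\<And>c. c \<in> D \<Longrightarrow> wt c \<le> n"
  shows "(\<Sum>c\<in>D. g (wt c)) = (\<Sum>i\<le>n. of_nat (card {c\<in>D. wt c = i}) * (g i :: 'a::comm_semiring_1))"
proof -
  have "(\<Sum>c\<in>D. g (wt c)) = (\<Sum>i\<le>n. \<Sum>c\<in>{c\<in>D. wt c = i}. g (wt c))"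
    using assms by (intro sum.group[symmetric]) auto
  then show ?thesis by simp
qed

definition near_extremal_enumerator :: "int \<Rightarrow> int poly" where
  "near_extremal_enumerator \<alpha> =
      monom 1 0 + monom \<alpha> 8 + monom (18216 - 8*\<alpha>) 10 + monom (156492 + 28*\<alpha>) 12
      + monom (1147608 - 56*\<alpha>) 14 + monom (3736557 + 70*\<alpha>) 16 + monom (6248088 - 56*\<alpha>) 18
      + monom (4399164 + 28*\<alpha>) 20 + monom (1038312 - 8*\<alpha>) 22 + monom (32778 + \<alpha>) 24"

lemma sum_atMost_24:
  "(\<Sum>i\<le>24. f i) = f 0 + f 1 + f 2 + f 3 + f 4 + f 5 + f 6 + f 7 + f 8 + f 9 + f 10 + f 11 + f 12
     + f 13 + f 14 + f 15 + f 16 + f 17 + f 18 + f 19 + f 20 + f 21 + f 22 + f 23 + f (24 :: nat)"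
  by (simp add: numeral_eq_Suc atMost_Suc add.commute add.left_commute)

text \<open>The eight unknowns \<open>N\<^sub>1\<^sub>0, \<dots>, N\<^sub>2\<^sub>4\<close> are determined by the identity at \<open>t = 2, \<dots>, 9\<close>.\<close>

lemma macwilliams_24_solution:
  fixes N :: "nat \<Rightarrow> int"
  assumes odd: "\<And>i. odd i \<Longrightarrow> N i = 0" and low: "N 0 = 1" "N 2 = 0" "N 4 = 0" "N 6 = 0"
    and MW: "\<And>t :: int. 4^12 * (\<Sum>i\<le>24. N i * t^i) = (\<Sum>i\<le>24. N i * ((1 + 3*t)^(24 - i) * (1 - t)^i))"
  shows "(\<Sum>i\<le>24. monom (N i) i) = near_extremal_enumerator (N 8)"
proof -
  have N_odd: "N 1 = 0" "N 3 = 0" "N 5 = 0" "N 7 = 0" "N 9 = 0" "N 11 = 0" "N 13 = 0" "N 15 = 0"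
    "N 17 = 0" "N 19 = 0" "N 21 = 0" "N 23 = 0"
    by (simp_all add: odd)
  note E = MW[of 2] MW[of 3] MW[of 4] MW[of 5] MW[of 6] MW[of 7] MW[of 8] MW[of 9]
  note E' = E[unfolded sum_atMost_24 N_odd low, simplified]
  have "N 10 = 18216 - 8 * N 8" "N 12 = 156492 + 28 * N 8" "N 14 = 1147608 - 56 * N 8"
    "N 16 = 3736557 + 70 * N 8" "N 18 = 6248088 - 56 * N 8" "N 20 = 4399164 + 28 * N 8"
    "N 22 = 1038312 - 8 * N 8" "N 24 = 32778 + N 8"
    using E' by algebra+
  then show ?thesis
    by (simp add: sum_atMost_24 odd low near_extremal_enumerator_def)
qed

lemma of_nat_mult_monom: "(of_nat n :: int poly) * monom 1 i = monom (int n) i"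
  by (induction n) (simp_all add: algebra_simps add_monom)

theorem weight_enumerator_herm_self_dual_24:
  assumes SD: "herm_self_dual 24 D"
    and light: "\<And>c. c \<in> D \<Longrightarrow> c \<noteq> zero_word 24 \<Longrightarrow> 8 \<le> wt c"
  shows "weight_enumerator D = near_extremal_enumerator (int (card {c\<in>D. wt c = 8}))"
proof -
  have D: "quaternary_code 24 D" and dual: "herm_dual 24 D = D"
    using SD by (simp_all add: herm_self_dual_def)
  have DV: "D \<subseteq> words 24" and z: "zero_word 24 \<in> D"
    using D by (auto simp: quaternary_code_def words_def)
  have fin: "finite D" using finite_subset[OF DV] by simp
  have wt24: "wt c \<le> 24" if "c \<in> D" for c
    using that DV wt_le_length[of c] by (auto simp: words_def)
  define N where "N i = int (card {c\<in>D. wt c = i})" for i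
  have "N 0 = 1"
  proof -
    have "{c\<in>D. wt c = 0} = {zero_word 24}"
      using DV z by (auto simp: wt_eq_0_iff_zero_word)
    then show ?thesis by (simp add: N_def)
  qed
  moreover have "N i = 0" if "0 < i" "i < 8" for i
    using light that unfolding N_def by (fastforce simp: card_eq_0_iff)
  moreover have "N i = 0" if "odd i" for i
    using even_wt_herm_self_dual[OF SD] that unfolding N_def by (fastforce simp: card_eq_0_iff)
  moreover have "card D = 4 ^ 12"
  proof (rule power2_eq_imp_eq)
    show "(card D)\<^sup>2 = (4 ^ 12)\<^sup>2"
      using card_herm_self_dual[OF SD] by simp
  qed simp_all
  then have "4^12 * (\<Sum>i\<le>24. N i * t^i) = (\<Sum>i\<le>24. N i * ((1 + 3*t)^(24 - i) * (1 - t)^i))"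
    for t :: int
    using macwilliams_identity[OF D, of t] dual
    by (simp add: N_def sum_by_wt[OF fin wt24, where g = "\<lambda>i. t ^ i"]
        sum_by_wt[OF fin wt24, where g = "\<lambda>i. (1 + 3*t)^(24 - i) * (1 - t)^i"])
  ultimately have "(\<Sum>i\<le>24. monom (N i) i) = near_extremal_enumerator (N 8)"
    by (intro macwilliams_24_solution) auto
  moreover have "weight_enumerator D = (\<Sum>i\<le>24. monom (N i) i)"
    by (simp add: weight_enumerator_def sum_by_wt[OF fin wt24, where 'a = "int poly"] N_def
        of_nat_mult_monom)
  ultimately show ?thesis
    by (simp add: N_def)
qed

lemma near_extremal_24I:
  assumes "herm_self_dual 24 D"
    and "\<And>c. c \<in> D \<Longrightarrow> c \<noteq> zero_word 24 \<Longrightarrow> 8 \<le> wt c"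
    and "c \<in> D" "wt c = 8"
  shows "near_extremal_24 D"
proof -
  have "c \<noteq> zero_word 24" using assms(4) by auto
  then have "8 \<in> wt ` (D - {zero_word 24})" using assms(3,4) by force
  moreover have "D \<subseteq> words 24"
    using assms(1) by (auto simp: herm_self_dual_def quaternary_code_def words_def)
  then have "finite D"
    by (rule finite_subset) simp
  ultimately have "min_weight 24 D = 8"
    unfolding min_weight_def using assms(2) by (intro Min_eqI) auto
  then show ?thesis
    using assms(1) by (simp add: near_extremal_24_def)
qed

section \<open>Enumerating the light codewords of a systematic code\<close>

definition bounded_comb_sum ::
    "(nat \<Rightarrow> nat \<Rightarrow> 'a::comm_monoid_add) \<Rightarrow> nat \<Rightarrow> F4 list list \<Rightarrow> nat \<Rightarrow> F4 list \<Rightarrow> nat \<Rightarrow> 'a" where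
  "bounded_comb_sum g n rs b s h =
     (\<Sum>\<mu>\<in>words (length rs). if \<mu> \<noteq> zero_word (length rs) \<and> wt \<mu> \<le> b
        then g (h + wt \<mu>) (wt (vadd s (lincomb n rs \<mu>))) else 0)"

fun comb_enum ::
    "(nat \<Rightarrow> nat \<Rightarrow> 'a::comm_monoid_add) \<Rightarrow> F4 list list \<Rightarrow> nat \<Rightarrow> F4 list \<Rightarrow> nat \<Rightarrow> 'a" where
  "comb_enum g [] b s h = 0"
| "comb_enum g (r # rs) 0 s h = 0"
| "comb_enum g (r # rs) (Suc b) s h = comb_enum g rs (Suc b) s h
     + (let s' = vadd s r in g (Suc h) (wt s') + comb_enum g rs b s' (Suc h))
     + (let s' = vadd s (smul Fw r) in g (Suc h) (wt s') + comb_enum g rs b s' (Suc h))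
     + (let s' = vadd s (smul Fw2 r) in g (Suc h) (wt s') + comb_enum g rs b s' (Suc h))"

lemma sum_words_if_wt_le:
  "(\<Sum>\<mu>\<in>words k. if wt \<mu> \<le> b then F \<mu> else 0) =
     F (zero_word k) +
     (\<Sum>\<mu>\<in>words k. if \<mu> \<noteq> zero_word k \<and> wt \<mu> \<le> b then F \<mu> else (0 :: 'a::comm_monoid_add))"
proof -
  have "(\<Sum>\<mu>\<in>words k. if wt \<mu> \<le> b then F \<mu> else 0) =
      (\<Sum>\<mu>\<in>words k. (if \<mu> = zero_word k then F \<mu> else 0) +
        (if \<mu> \<noteq> zero_word k \<and> wt \<mu> \<le> b then F \<mu> else 0))"
    by (intro sum.cong refl) auto
  then show ?thesis
    by (simp add: sum.distrib sum.delta)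
qed

lemma bounded_comb_sum_0 [simp]: "bounded_comb_sum g n rs 0 s h = 0"
  by (auto simp: bounded_comb_sum_def words_def wt_eq_0_iff intro: sum.neutral)

lemma bounded_comb_sum_Cons_coeff:
  assumes rows: "set (r # rs) \<subseteq> words n" and s: "length s = n" and a: "a \<noteq> 0"
  shows "(\<Sum>\<mu>\<in>words (length rs). if a # \<mu> \<noteq> zero_word (Suc (length rs)) \<and> wt (a # \<mu>) \<le> Suc b
      then g (h + wt (a # \<mu>)) (wt (vadd s (lincomb n (r # rs) (a # \<mu>)))) else 0) =
    g (Suc h) (wt (vadd s (smul a r))) + bounded_comb_sum g n rs b (vadd s (smul a r)) (Suc h)"
proof -
  let ?s' = "vadd s (smul a r)"
  have r: "length r = n" and rs: "set rs \<subseteq> words n"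
    using rows by (auto simp: words_def)
  have "(\<Sum>\<mu>\<in>words (length rs). if a # \<mu> \<noteq> zero_word (Suc (length rs)) \<and> wt (a # \<mu>) \<le> Suc b
      then g (h + wt (a # \<mu>)) (wt (vadd s (lincomb n (r # rs) (a # \<mu>)))) else 0) =
    (\<Sum>\<mu>\<in>words (length rs).
      if wt \<mu> \<le> b then g (Suc h + wt \<mu>) (wt (vadd ?s' (lincomb n rs \<mu>))) else 0)"
    using a r rs s by (intro sum.cong refl) (auto simp: zero_word_Suc vadd_assoc)
  also have "\<dots> = g (Suc h) (wt ?s') + bounded_comb_sum g n rs b ?s' (Suc h)"
    using r rs s by (simp add: sum_words_if_wt_le bounded_comb_sum_def lincomb_zero_word
        vadd_zero_word_right)
  finally show ?thesis .
qed

lemma comb_enum_eq_bounded_comb_sum: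
  "set rs \<subseteq> words n \<Longrightarrow> length s = n \<Longrightarrow> comb_enum g rs b s h = bounded_comb_sum g n rs b s h"
proof (induction rs arbitrary: b s h)
  case Nil
  then show ?case by (simp add: bounded_comb_sum_def words_0)
next
  case (Cons r rs)
  have r: "length r = n" and rs: "set rs \<subseteq> words n"
    using Cons.prems(1) by (auto simp: words_def)
  show ?case
  proof (cases b)
    case 0
    then show ?thesis by simp
  next
    case (Suc b')
    let ?T = "\<lambda>a. (\<Sum>\<mu>\<in>words (length rs).
      if a # \<mu> \<noteq> zero_word (Suc (length rs)) \<and> wt (a # \<mu>) \<le> Suc b'
      then g (h + wt (a # \<mu>)) (wt (vadd s (lincomb n (r # rs) (a # \<mu>)))) else 0)"
    have T0: "?T F0 = bounded_comb_sum g n rs (Suc b') s h"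
      unfolding bounded_comb_sum_def using r rs Cons.prems(2)
      by (intro sum.cong refl) (auto simp: F0_eq_zero zero_word_Suc smul_zero vadd_zero_word_left)
    have T: "?T a =
        g (Suc h) (wt (vadd s (smul a r))) + bounded_comb_sum g n rs b' (vadd s (smul a r)) (Suc h)"
      if "a \<noteq> 0" for a
      using bounded_comb_sum_Cons_coeff[OF Cons.prems that] .
    have "bounded_comb_sum g n (r # rs) b s h = ?T F0 + ?T F1 + ?T Fw + ?T Fw2"
      unfolding bounded_comb_sum_def Suc by (simp only: length_Cons sum_words_Suc sum_UNIV_F4)
    also have "\<dots> = comb_enum g (r # rs) b s h"
      unfolding T0 T[OF F4_nonzero(1)] T[OF F4_nonzero(2)] T[OF F4_nonzero(3)] Suc
      using Cons.IH[OF rs] r Cons.prems(2) by (simp add: Let_def F1_eq_one smul_one)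
    finally show ?thesis by (rule sym)
  qed
qed

lemma bounded_comb_sum_smul:
  assumes rs: "set rs \<subseteq> words n" and s: "length s = n" and c: "c \<noteq> 0"
  shows "bounded_comb_sum g n rs b (smul c s) h = bounded_comb_sum g n rs b s h"
  unfolding bounded_comb_sum_def
proof (rule sym, rule sum.reindex_bij_witness[where j = "smul c" and i = "smul (inverse c)"])
  fix \<mu> assume \<mu>: "\<mu> \<in> words (length rs)"
  then have l\<mu>: "length \<mu> = length rs" by (simp add: words_def)
  show "smul (inverse c) (smul c \<mu>) = \<mu>" "smul c \<mu> \<in> words (length rs)"
    using c \<mu> by (simp_all add: smul_smul smul_one words_def)
  have "vadd (smul c s) (lincomb n rs (smul c \<mu>)) = smul c (vadd s (lincomb n rs \<mu>))"
    using rs l\<mu> by (simp add: lincomb_smul smul_vadd)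
  then show "(if smul c \<mu> \<noteq> zero_word (length rs) \<and> wt (smul c \<mu>) \<le> b
        then g (h + wt (smul c \<mu>)) (wt (vadd (smul c s) (lincomb n rs (smul c \<mu>)))) else 0) =
      (if \<mu> \<noteq> zero_word (length rs) \<and> wt \<mu> \<le> b
       then g (h + wt \<mu>) (wt (vadd s (lincomb n rs \<mu>))) else 0)"
    using c l\<mu> by (simp add: smul_eq_zero_word_iff[OF c l\<mu>] wt_smul)
next
  fix \<mu> assume "\<mu> \<in> words (length rs)"
  then show "smul c (smul (inverse c) \<mu>) = \<mu>" "smul (inverse c) \<mu> \<in> words (length rs)"
    using c by (simp_all add: smul_smul smul_one words_def)
qed

text \<open>One combination per projective point: the first nonzero coefficient is \<open>1\<close>.\<close>

fun proj_comb_enum :: "(nat \<Rightarrow> nat \<Rightarrow> 'a::comm_monoid_add) \<Rightarrow> F4 list list \<Rightarrow> nat \<Rightarrow> 'a" where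
  "proj_comb_enum g [] b = 0"
| "proj_comb_enum g (r # rs) 0 = 0"
| "proj_comb_enum g (r # rs) (Suc b) =
     proj_comb_enum g rs (Suc b) + g 1 (wt r) + comb_enum g rs b r 1"

lemma comb_enum_zero_word:
  "set rs \<subseteq> words n \<Longrightarrow>
     comb_enum g rs b (zero_word n) 0 =
       proj_comb_enum g rs b + proj_comb_enum g rs b + proj_comb_enum g rs b"
proof (induction rs arbitrary: b)
  case Nil
  then show ?case by simp
next
  case (Cons r rs)
  have r: "length r = n" and rs: "set rs \<subseteq> words n"
    using Cons.prems by (auto simp: words_def)
  have scaled:
    "g 1 (wt (smul c r)) + comb_enum g rs b (smul c r) 1 = g 1 (wt r) + comb_enum g rs b r 1"
    if "c \<noteq> 0" for c b
    using that r rs by (simp add: wt_smul comb_enum_eq_bounded_comb_sum bounded_comb_sum_smul)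
  show ?case
  proof (cases b)
    case (Suc b')
    then show ?thesis
      using Cons.IH[OF rs] scaled[of Fw b'] scaled[of Fw2 b'] r
      by (simp add: vadd_zero_word_left algebra_simps)
  qed simp
qed

text \<open>A codeword \<open>m @ m A\<close> of weight at most \<open>2 b\<close> has \<open>wt m \<le> b\<close>, or else its check part
  \<open>t = m A\<close> has weight below \<open>b\<close>, and then \<open>m = t A\<^sup>*\<close> is recovered from \<open>t\<close>.\<close>

theorem sum_light_systematic_code:
  assumes U: "unitary A" and f: "\<And>w. 2 * b < w \<Longrightarrow> f w = 0"
  shows "(\<Sum>c\<in>systematic_code A - {zero_word (2 * length A)}. f (wt c)) =
    bounded_comb_sum (\<lambda>i j. f (i + j)) (length A) A b (zero_word (length A)) 0
    + bounded_comb_sum (\<lambda>i j. if b < j then f (i + j) else 0) (length A) (adjoint A) (b - 1)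
        (zero_word (length A)) 0"
proof -
  let ?k = "length A" and ?B = "adjoint A"
  let ?F = "\<lambda>m. if m = zero_word ?k then 0 else f (wt m + wt (lincomb ?k A m))"
  have sq: "square_mat A" using U by (simp add: unitary_def)
  then have rows: "set A \<subseteq> words ?k" "set ?B \<subseteq> words ?k"
    using square_mat_adjoint[of A] by (simp_all add: square_mat_def)
  have enc0: "m @ lincomb ?k A m = zero_word (2 * ?k) \<longleftrightarrow> m = zero_word ?k" if "m \<in> words ?k" for m
    using that rows append_eq_zero_word_iff[of m ?k "lincomb ?k A m"]
    by (auto simp: words_def mult_2 lincomb_zero_word)
  have "systematic_code A - {zero_word (2 * ?k)} = {c\<in>systematic_code A. c \<noteq> zero_word (2 * ?k)}"
    by blast
  then have "(\<Sum>c\<in>systematic_code A - {zero_word (2 * ?k)}. f (wt c)) =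
      (\<Sum>c\<in>systematic_code A. if c \<noteq> zero_word (2 * ?k) then f (wt c) else 0)"
    by (simp add: sum.inter_filter)
  also have "\<dots> = (\<Sum>m\<in>words ?k. ?F m)"
    unfolding sum_systematic_code using enc0 by (intro sum.cong refl) auto
  also have "\<dots> = (\<Sum>m\<in>words ?k. if wt m \<le> b then ?F m else 0) +
      (\<Sum>m\<in>words ?k. if wt m \<le> b then 0 else ?F m)"
    unfolding sum.distrib[symmetric] by (intro sum.cong refl) simp
  also have "(\<Sum>m\<in>words ?k. if wt m \<le> b then ?F m else 0) =
      bounded_comb_sum (\<lambda>i j. f (i + j)) ?k A b (zero_word ?k) 0"
    unfolding bounded_comb_sum_def using rows
    by (intro sum.cong refl) (auto simp: words_def vadd_zero_word_left)
  also have "(\<Sum>m\<in>words ?k. if wt m \<le> b then 0 else ?F m) =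
      (\<Sum>t\<in>words ?k. if wt (lincomb ?k ?B t) \<le> b then 0 else ?F (lincomb ?k ?B t))"
    using rows U sq unitary_def
    by (intro sum.reindex_bij_witness[where i = "lincomb ?k ?B" and j = "lincomb ?k A"])
      (auto simp: words_def lincomb_adjoint_lincomb lincomb_lincomb_adjoint)
  also have "\<dots> =
      bounded_comb_sum (\<lambda>i j. if b < j then f (i + j) else 0) ?k ?B (b - 1) (zero_word ?k) 0"
    unfolding bounded_comb_sum_def length_adjoint
  proof (intro sum.cong refl)
    fix t assume "t \<in> words ?k"
    then have t: "length t = ?k" by (simp add: words_def)
    let ?m = "lincomb ?k ?B t"
    have m: "length ?m = ?k" "lincomb ?k A ?m = t"
      using rows t lincomb_lincomb_adjoint[OF U t] by simp_all
    have m0: "?m = zero_word ?k \<longleftrightarrow> t = zero_word ?k"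
      using m(2) rows lincomb_zero_word[of ?B ?k] by (auto simp: lincomb_zero_word)
    show "(if wt ?m \<le> b then 0 else ?F ?m) =
        (if t \<noteq> zero_word ?k \<and> wt t \<le> b - 1 then
          if b < wt (vadd (zero_word ?k) ?m) then f (0 + wt t + wt (vadd (zero_word ?k) ?m)) else 0
         else 0)"
      using m m0 f[of "wt ?m + wt t"] t wt_eq_0_iff[of t]
      by (auto simp: vadd_zero_word_left add.commute)
  qed
  finally show ?thesis .
qed

section \<open>Certificates for near-extremal codes of length 24\<close>

definition weight_tally :: "nat \<Rightarrow> nat \<times> nat" where
  "weight_tally w = (if w < 8 then 1 else 0, if w = 8 then 1 else 0)"

text \<open>A partially applied constant rather than a lambda: this makes evaluation of the
  enumeration by \<open>code_simp\<close> markedly faster.\<close>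

definition tally_score :: "nat \<Rightarrow> nat \<Rightarrow> nat \<Rightarrow> nat \<times> nat" where
  "tally_score th i j = (if th \<le> j then weight_tally (i + j) else 0)"

definition light_census :: "F4 list list \<Rightarrow> nat \<times> nat" where
  "light_census A =
     (let p = proj_comb_enum (tally_score 0) A 4 + proj_comb_enum (tally_score 5) (adjoint A) 3
      in p + p + p)"

lemma sum_weight_tally:
  assumes "finite D"
  shows "(\<Sum>c\<in>D. weight_tally (wt c)) = (card {c\<in>D. wt c < 8}, card {c\<in>D. wt c = 8})"
proof -
  have "card {c\<in>D. P c} = (\<Sum>c\<in>D. if P c then 1 else 0)" for P
    using assms by (simp add: sum.inter_filter[symmetric])
  then show ?thesis
    by (simp add: prod_eq_iff fst_sum snd_sum weight_tally_def)
qed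

lemma light_census_eq:
  assumes U: "unitary A"
  shows "light_census A =
    (card {c\<in>systematic_code A - {zero_word (2 * length A)}. wt c < 8},
     card {c\<in>systematic_code A. wt c = 8})"
proof -
  let ?k = "length A" and ?z = "zero_word (2 * length A)"
  have rows: "set A \<subseteq> words ?k" "set (adjoint A) \<subseteq> words ?k"
    using U square_mat_adjoint[of A] by (simp_all add: unitary_def square_mat_def)
  have "{c\<in>systematic_code A - {?z}. wt c = 8} = {c\<in>systematic_code A. wt c = 8}"
    by auto
  then have "(\<Sum>c\<in>systematic_code A - {?z}. weight_tally (wt c)) =
      (card {c\<in>systematic_code A - {?z}. wt c < 8}, card {c\<in>systematic_code A. wt c = 8})"
    by (simp add: sum_weight_tally)
  moreover have "tally_score 0 = (\<lambda>i j. weight_tally (i + j))"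
    and "tally_score 5 = (\<lambda>i j. if 4 < j then weight_tally (i + j) else 0)"
    by (auto simp: tally_score_def fun_eq_iff Suc_le_eq)
  moreover have "weight_tally w = 0" if "2 * 4 < w" for w
    using that by (simp add: weight_tally_def zero_prod_def)
  ultimately show ?thesis
    using sum_light_systematic_code[OF U, of 4 weight_tally] rows
    by (simp add: light_census_def comb_enum_zero_word comb_enum_eq_bounded_comb_sum [symmetric]
        Let_def add_ac)
qed

definition certifies :: "nat \<Rightarrow> F4 list list \<Rightarrow> bool" where
  "certifies \<alpha> A \<longleftrightarrow> length A = 12 \<and> unitary A \<and> light_census A = (0, \<alpha>) \<and> 0 < \<alpha>"

theorem certifies_near_extremal_24:
  assumes "certifies \<alpha> A"
  shows "near_extremal_24 (systematic_code A) \<and>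
    weight_enumerator (systematic_code A) = near_extremal_enumerator (int \<alpha>)"
proof -
  let ?D = "systematic_code A"
  have A: "length A = 12" and U: "unitary A" and census: "light_census A = (0, \<alpha>)" and "0 < \<alpha>"
    using assms by (simp_all add: certifies_def)
  have SD: "herm_self_dual 24 ?D"
    using herm_self_dual_systematic_code[OF U] A by simp
  have none: "{c\<in>?D - {zero_word 24}. wt c < 8} = {}" and eight: "card {c\<in>?D. wt c = 8} = \<alpha>"
    using census light_census_eq[OF U] A by simp_all
  then have light: "8 \<le> wt c" if "c \<in> ?D" "c \<noteq> zero_word 24" for c
    using that by (auto simp: card_eq_0_iff)
  obtain c where "c \<in> ?D" "wt c = 8"
    using eight \<open>0 < \<alpha>\<close> by (metis (mono_tags, lifting) card.empty empty_Collect_eq less_irrefl)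
  then show ?thesis
    using near_extremal_24I[OF SD light] weight_enumerator_herm_self_dual_24[OF SD light] eight
    by simp
qed

definition A513 :: "F4 list list" where
  "A513 = [[Fw2, Fw, Fw, Fw2, Fw2, Fw2, Fw, F1, Fw2, Fw, Fw2, F0],
   [F0, F0, F1, Fw2, Fw, Fw2, Fw, F1, F0, F1, Fw, Fw2],
   [F1, F0, Fw, Fw, Fw2, F0, Fw, Fw2, Fw2, F0, F1, F1],
   [F0, Fw, F0, F0, Fw, F1, F1, Fw, Fw, F1, Fw2, Fw2],
   [Fw2, F0, Fw2, F0, F1, F1, Fw2, Fw, Fw2, Fw2, F0, Fw2],
   [F1, F1, F0, F1, F0, Fw, Fw, F0, Fw, Fw, Fw, Fw],
   [Fw2, F0, Fw, F1, F1, Fw2, Fw, F0, Fw, F1, F0, F1],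
   [Fw, F0, F0, F0, Fw, Fw2, Fw, F1, F0, F0, Fw2, F1],
   [Fw2, Fw, F1, Fw, F0, Fw, F0, Fw2, Fw2, F1, F1, F0],
   [Fw, Fw2, Fw2, Fw, Fw2, F1, Fw, F0, Fw2, F1, F0, F0],
   [F1, Fw2, Fw2, Fw, F1, Fw, F1, F0, F1, Fw2, Fw, Fw2],
   [F0, F1, Fw, Fw, F0, Fw2, F1, F0, F0, F0, Fw, F1]]"

lemma certifies_A513: "certifies 513 A513"
  unfolding A513_def by code_simp

definition A522 :: "F4 list list" where
  "A522 = [[Fw2, Fw, Fw, F0, Fw2, F0, F0, Fw, Fw2, Fw, F1, Fw],
   [F1, Fw, F0, F0, F0, Fw, Fw2, F1, F0, Fw, F0, Fw],
   [Fw, Fw, F1, F1, F0, Fw2, F0, F0, Fw2, F1, F1, Fw2],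
   [F1, Fw, Fw2, F0, Fw, F0, Fw2, F0, Fw, Fw, F0, F0],
   [Fw, F0, F1, Fw2, F0, F1, Fw, Fw2, Fw2, Fw, Fw, F0],
   [Fw2, Fw2, F1, Fw, F1, Fw, F0, F1, F1, F1, Fw, Fw2],
   [Fw2, Fw, F1, Fw, F0, Fw, Fw, Fw2, F0, F1, Fw, F0],
   [F0, Fw2, F0, Fw, Fw2, Fw, Fw2, Fw, F0, Fw, Fw, Fw],
   [Fw2, F0, Fw2, Fw, Fw2, Fw, Fw, F0, F1, F0, F1, Fw],
   [Fw, F1, F0, F1, F1, F0, F1, F1, Fw, Fw, F0, F1],
   [Fw2, F0, F1, Fw, F0, Fw2, Fw2, F0, Fw2, Fw2, Fw2, Fw2],
   [Fw, F1, F1, Fw2, F1, Fw, F1, F0, F1, Fw, F1, F1]]"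

lemma certifies_A522: "certifies 522 A522"
  unfolding A522_def by code_simp

definition A540 :: "F4 list list" where
  "A540 = [[Fw2, F0, F0, Fw2, Fw2, Fw2, F0, F1, Fw2, Fw2, F1, Fw2],
   [Fw, F0, F1, F0, Fw, Fw2, F1, Fw2, F0, F0, F0, F1],
   [F1, F0, Fw2, Fw, Fw, Fw, Fw2, Fw, Fw2, Fw, Fw, Fw],
   [F1, F1, F0, F1, F0, F1, F1, F1, F0, Fw2, F1, Fw],
   [F1, Fw2, Fw, F1, Fw, Fw2, F0, Fw, F0, F0, Fw2, Fw],
   [Fw2, F0, Fw, Fw, F1, F0, F0, F0, F1, F0, Fw2, Fw2],
   [Fw, Fw2, Fw2, Fw2, F0, Fw2, F0, Fw, F1, F1, F1, F0],
   [F0, F0, F0, Fw, F0, F1, Fw2, Fw2, Fw2, F1, F1, F0],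
   [Fw, F1, F1, F1, F1, F1, Fw, Fw2, F1, Fw, F0, Fw],
   [F1, Fw, Fw, F0, F0, Fw, F0, Fw2, Fw, F0, F0, Fw2],
   [Fw2, F1, Fw2, Fw2, F0, Fw2, Fw, F1, Fw2, F0, F1, F0],
   [Fw2, Fw, Fw, F0, Fw2, Fw2, Fw, Fw, Fw, F1, F1, Fw]]"

lemma certifies_A540: "certifies 540 A540"
  unfolding A540_def by code_simp

definition A549 :: "F4 list list" where
  "A549 = [[F0, F0, Fw, F1, Fw, Fw, F0, F0, F0, Fw2, Fw2, Fw2],
   [F0, F0, F1, F1, F1, F1, Fw, Fw2, F1, Fw, F0, Fw2],
   [Fw2, F1, F0, F0, Fw, F0, F0, Fw2, F0, Fw2, Fw2, Fw2],
   [F0, Fw2, F1, F0, Fw, F1, F1, Fw, Fw2, Fw, F1, F0],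
   [F1, Fw2, Fw2, F1, F1, F0, F1, F1, Fw, Fw, F1, Fw2],
   [Fw, Fw, Fw, Fw, Fw, F0, F1, F1, F1, F1, Fw2, Fw2],
   [F0, F1, Fw, F0, Fw2, F1, Fw2, Fw, Fw, F1, F1, F0],
   [Fw, Fw2, Fw, F0, F0, Fw2, F0, Fw, Fw, Fw, Fw2, Fw2],
   [Fw2, Fw2, F0, F0, Fw, F0, Fw2, F1, Fw, F0, Fw2, F0],
   [Fw, Fw, F1, Fw2, Fw, Fw2, Fw2, Fw, F1, F1, Fw2, F0],
   [F0, F0, F1, Fw, F1, Fw2, Fw2, Fw, Fw2, F1, F1, F0],
   [Fw2, F1, F0, F1, Fw2, F0, Fw2, Fw2, F0, F1, Fw, F1]]"

lemma certifies_A549: "certifies 549 A549"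
  unfolding A549_def by code_simp

definition A576 :: "F4 list list" where
  "A576 = [[F0, F0, Fw2, F1, Fw2, F1, F0, F1, F1, Fw, Fw, Fw],
   [Fw, F1, F0, F0, F1, F0, F1, Fw, F0, F1, F1, F0],
   [F1, Fw, F0, F0, F0, Fw2, F0, Fw2, Fw, Fw, F1, F0],
   [Fw, F1, Fw, Fw2, Fw, Fw2, F1, Fw, Fw, F0, Fw, Fw],
   [F0, Fw2, Fw, Fw2, Fw2, Fw2, F0, Fw, F1, F1, F0, Fw2],
   [Fw, Fw2, F1, Fw, F1, F0, F0, Fw2, Fw2, F1, F0, Fw],
   [Fw2, Fw2, Fw, F0, Fw2, Fw, Fw, Fw, F0, F0, F1, Fw],
   [F0, Fw2, Fw, F0, Fw, F0, F1, F1, Fw, F1, Fw, Fw],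
   [F1, Fw, Fw2, Fw2, F1, Fw2, Fw, F0, F0, Fw, F0, Fw2],
   [F1, Fw2, F0, Fw2, Fw, Fw, Fw2, F0, F0, Fw2, Fw, Fw],
   [Fw2, F1, Fw, Fw, F1, F1, F0, F1, Fw2, Fw, Fw2, F1],
   [Fw2, F1, Fw2, F0, Fw2, Fw2, F1, F0, F0, F0, F1, F0]]"

lemma certifies_A576: "certifies 576 A576"
  unfolding A576_def by code_simp

definition A594 :: "F4 list list" where
  "A594 = [[Fw, Fw, Fw, Fw2, Fw, F0, F1, F0, Fw, Fw, F0, F1],
   [F0, Fw, F0, Fw, Fw, F1, Fw2, Fw, F0, Fw2, F1, Fw],
   [Fw, Fw2, Fw2, Fw2, F0, Fw2, F0, F1, Fw2, F0, F1, Fw],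
   [F1, Fw, Fw2, F0, F1, F1, Fw, Fw2, Fw, Fw2, Fw, Fw],
   [F1, F1, F1, Fw2, Fw, Fw, Fw2, F1, Fw2, Fw2, F1, F0],
   [F0, Fw, Fw2, Fw, Fw2, F1, Fw2, F1, F1, Fw2, F0, F0],
   [Fw2, F0, F0, Fw2, Fw, F1, F1, Fw, Fw2, Fw, Fw, F0],
   [Fw2, F1, Fw, Fw, Fw2, F0, Fw, F0, F0, Fw, F1, Fw],
   [Fw, F0, F1, F0, F1, F0, Fw2, Fw, Fw, Fw2, F1, F1],
   [F1, Fw2, Fw2, F1, F1, F1, Fw2, F0, F1, Fw, Fw2, Fw2],
   [Fw, Fw, Fw2, F0, Fw2, Fw2, Fw2, F1, F1, Fw, Fw, F1],
   [F0, F0, F0, F1, Fw2, F1, Fw2, F1, F0, Fw, F0, Fw]]"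

lemma certifies_A594: "certifies 594 A594"
  unfolding A594_def by code_simp

definition A621 :: "F4 list list" where
  "A621 = [[F0, Fw2, Fw, Fw2, F0, F0, F0, F1, F0, Fw2, F1, Fw],
   [F1, Fw, F0, F0, F1, Fw, Fw, F1, F0, F1, Fw2, F1],
   [F0, Fw, Fw, Fw2, Fw, Fw, F0, Fw, Fw2, F1, Fw2, F0],
   [F0, Fw2, F1, Fw2, Fw, F0, Fw2, F1, Fw, F0, Fw2, Fw],
   [Fw, F0, F0, Fw2, F0, Fw2, F1, Fw2, F1, Fw, Fw2, Fw2],
   [Fw, F0, F0, F1, Fw, F1, F1, Fw2, F0, Fw2, Fw2, F1],
   [F1, Fw, F1, Fw2, Fw2, F0, Fw2, Fw2, Fw, Fw2, Fw, Fw],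
   [F1, Fw, F1, F0, Fw, F0, Fw, F1, Fw, F0, Fw, F1],
   [Fw, Fw, Fw, Fw2, Fw, F1, Fw2, Fw, Fw, F0, Fw2, Fw2],
   [Fw2, Fw2, Fw2, F1, Fw, F1, F0, F0, Fw2, F1, F0, F1],
   [Fw2, F1, F0, F0, F0, F1, F1, Fw, F1, F1, F1, F1],
   [F1, F0, F0, Fw, Fw2, F0, Fw2, F1, F1, F1, Fw2, F1]]"

lemma certifies_A621: "certifies 621 A621"
  unfolding A621_def by code_simp

definition A630 :: "F4 list list" where
  "A630 = [[Fw, Fw2, Fw2, F1, F1, F0, F0, Fw2, Fw2, Fw2, F0, Fw2],
   [Fw2, Fw, F1, Fw2, Fw2, F1, Fw2, Fw, F1, F1, Fw2, F0],
   [Fw2, Fw, Fw, F0, Fw, F0, Fw, Fw2, Fw2, Fw2, F0, Fw2],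
   [F1, Fw2, F0, F1, F1, Fw, Fw, Fw, F1, Fw2, F1, F1],
   [F1, F1, F0, F0, F0, Fw2, F0, Fw, F1, Fw, F0, Fw],
   [F1, F0, Fw, Fw, Fw2, F1, F0, F0, Fw2, Fw, F1, Fw],
   [F1, Fw2, F1, Fw2, Fw2, F1, Fw, F0, F0, Fw2, F0, Fw2],
   [Fw2, Fw2, Fw, Fw2, Fw, F0, Fw2, Fw, F1, F0, F1, F0],
   [Fw2, F1, Fw, Fw, Fw2, F0, F1, Fw2, Fw2, F1, F0, F0],
   [F1, F1, F1, Fw2, F0, Fw2, Fw2, Fw, Fw2, Fw2, F1, Fw],
   [Fw, Fw, Fw, F1, Fw2, F0, Fw2, F0, Fw2, F0, Fw2, F1],
   [F0, Fw2, F0, F0, F0, F1, F1, Fw2, Fw, F0, Fw2, Fw]]"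

lemma certifies_A630: "certifies 630 A630"
  unfolding A630_def by code_simp

definition A657 :: "F4 list list" where
  "A657 = [[Fw, F1, Fw2, Fw2, Fw2, F0, Fw, Fw2, Fw2, F1, F1, Fw],
   [F0, F0, F0, Fw, Fw, Fw, F1, Fw2, F0, Fw2, F0, Fw],
   [Fw2, Fw, Fw2, F1, F0, Fw, Fw2, F0, Fw2, Fw2, Fw2, F0],
   [F1, F0, F1, Fw, Fw2, Fw, F1, Fw2, Fw, Fw2, Fw, F1],
   [Fw2, F1, Fw, Fw, F0, Fw2, Fw, F0, F1, Fw2, Fw2, F0],
   [F0, F1, F1, F0, Fw2, F0, F1, Fw2, Fw2, F1, F0, F0],
   [Fw2, Fw, F0, F0, F1, F0, F1, F0, Fw2, F0, Fw, Fw2],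
   [F1, F1, F1, F0, F0, Fw2, Fw, F1, Fw2, F1, Fw2, F0],
   [Fw2, Fw, F0, F1, F1, Fw2, F0, F0, Fw2, F1, F0, F0],
   [Fw2, F1, F1, Fw2, Fw, Fw, F0, Fw, F0, F0, F1, Fw],
   [F0, F0, F1, Fw, Fw, F1, F0, F0, F1, F0, Fw2, F1],
   [F1, F1, Fw, Fw, Fw, F1, Fw, Fw2, F0, Fw2, Fw2, Fw]]"

lemma certifies_A657: "certifies 657 A657"
  unfolding A657_def by code_simp

definition A684 :: "F4 list list" where
  "A684 = [[F0, F1, F0, F1, Fw2, F0, F1, F1, F1, Fw2, Fw2, F1],
   [F1, F1, F1, F0, Fw, Fw, Fw2, F1, Fw, Fw2, F1, F1],
   [F0, Fw, Fw2, F1, F1, F0, F0, F1, Fw, F0, F0, Fw],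
   [F0, Fw, Fw2, Fw2, F1, Fw, F0, Fw, F1, F0, Fw2, F1],
   [F0, F0, F1, F0, Fw2, Fw2, Fw2, F0, F0, Fw2, Fw2, Fw],
   [Fw2, F0, Fw2, Fw, F0, F0, F1, F0, F0, Fw2, Fw, F1],
   [Fw2, Fw, Fw2, F1, Fw2, F1, Fw, F1, F0, F0, F0, F1],
   [F1, Fw2, F0, Fw2, F1, Fw, F1, F0, F0, F0, Fw, F0],
   [F1, Fw, Fw, Fw, Fw2, Fw, Fw2, Fw, Fw2, F1, F0, F1],
   [F0, Fw, Fw2, F0, Fw2, Fw2, F0, F1, F0, F0, Fw2, Fw2],
   [Fw2, F0, Fw, F1, F1, F0, F1, Fw, Fw, Fw2, Fw, F0],
   [Fw, F1, F0, Fw2, F1, F0, Fw2, Fw2, Fw2, Fw2, F1, F0]]"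

lemma certifies_A684: "certifies 684 A684"
  unfolding A684_def by code_simp

definition A702 :: "F4 list list" where
  "A702 = [[F0, F1, Fw, F1, F1, Fw, Fw, Fw2, Fw2, F1, F0, F0],
   [F0, Fw, F1, Fw, F0, Fw, Fw, Fw, Fw2, F1, F0, Fw2],
   [F1, F0, Fw, F0, F1, Fw, Fw, F0, F0, F0, F1, F1],
   [Fw, Fw2, F0, F0, Fw2, Fw2, F1, Fw, F0, Fw, F0, F0],
   [F1, Fw, Fw2, Fw, Fw2, Fw, F1, Fw, Fw, Fw2, Fw, F0],
   [F0, F1, Fw2, Fw2, Fw, F0, Fw, Fw, Fw, Fw2, F0, F1],
   [F0, F1, Fw2, F0, Fw2, Fw2, F1, F1, Fw, F0, Fw2, Fw2],
   [F1, Fw, Fw, F0, F1, Fw, F1, Fw2, F1, Fw2, Fw, F1],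
   [Fw, Fw, F1, Fw, Fw, F1, F0, Fw, F1, Fw2, F1, F1],
   [Fw, Fw2, Fw, F1, F0, Fw2, F1, Fw2, F0, Fw2, F0, Fw],
   [F0, F1, Fw2, F1, F1, Fw, Fw, Fw, F0, F0, Fw, F1],
   [F1, F1, F1, F0, F0, F1, Fw, Fw2, F0, F1, Fw, Fw]]"

lemma certifies_A702: "certifies 702 A702"
  unfolding A702_def by code_simp

definition A738 :: "F4 list list" where
  "A738 = [[F1, F1, F1, Fw2, Fw, Fw, F1, F1, F1, Fw, F1, F0],
   [Fw, Fw2, Fw2, F0, F1, Fw2, F0, F0, F0, F0, Fw2, Fw],
   [F1, Fw2, Fw, F0, Fw, F1, F0, F1, Fw, Fw, F0, Fw],
   [Fw, F0, Fw2, F1, F1, F0, Fw2, Fw, Fw2, Fw2, F0, Fw],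
   [Fw2, F1, Fw, F1, Fw2, Fw, F1, Fw2, Fw, Fw, F0, F1],
   [Fw, F0, Fw2, Fw, Fw, Fw2, Fw2, F1, F1, F0, Fw, F0],
   [F0, F1, F1, Fw, F0, Fw2, F1, F0, F1, F1, Fw, Fw2],
   [F1, Fw2, Fw, Fw2, F1, F1, F0, Fw, Fw, F0, F1, F0],
   [Fw2, F0, Fw, Fw2, Fw, Fw, F1, F1, Fw2, Fw, Fw, F1],
   [Fw2, Fw2, F1, F0, F0, F1, F0, Fw2, F0, F1, Fw, F0],
   [F1, F1, F1, Fw2, F0, F0, F0, F0, F0, Fw, F1, Fw],
   [Fw2, Fw2, F0, F1, F1, F0, Fw2, F1, F1, F1, F1, F0]]"

lemma certifies_A738: "certifies 738 A738"
  unfolding A738_def by code_simp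

definition A756 :: "F4 list list" where
  "A756 = [[Fw2, F1, Fw, Fw2, Fw, F1, F0, Fw, F1, F0, Fw2, F0],
   [Fw, F0, F1, Fw2, Fw2, F1, Fw, Fw2, F0, Fw, F0, Fw2],
   [Fw, Fw2, Fw, F0, Fw, F1, Fw, Fw2, F1, Fw2, F1, Fw],
   [F1, F0, F0, F0, Fw2, Fw2, F1, Fw2, F1, F0, F0, Fw],
   [F0, F0, F0, Fw, Fw2, F0, F0, Fw, Fw2, Fw2, Fw, Fw],
   [F1, F0, F0, F0, Fw2, F0, F1, F0, Fw, F1, F1, F1],
   [Fw, F1, F1, Fw, Fw, Fw, F0, F0, F0, F1, Fw2, Fw2],
   [F0, Fw2, F1, Fw2, F1, Fw, Fw2, Fw, F1, Fw, F0, F0],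
   [F0, F0, Fw2, F0, Fw2, Fw2, F0, F1, Fw, F1, F1, F0],
   [Fw, Fw2, F1, F0, F0, Fw2, Fw2, F0, F1, Fw2, Fw2, Fw],
   [Fw2, Fw, Fw, Fw2, F1, F1, F1, F0, F0, F0, Fw2, Fw2],
   [Fw, Fw2, Fw2, F1, F1, F0, F0, F0, Fw, F1, Fw2, Fw2]]"

lemma certifies_A756: "certifies 756 A756"
  unfolding A756_def by code_simp

definition A765 :: "F4 list list" where
  "A765 = [[F0, F1, Fw2, Fw2, Fw, F0, Fw2, F0, F1, Fw, F1, F1],
   [F1, F0, F0, F0, F0, F0, Fw, F1, Fw, F1, Fw2, F1],
   [F1, Fw2, Fw, Fw, Fw2, F1, F0, F1, F0, F0, Fw, Fw2],
   [F0, F1, Fw, F0, Fw, F1, Fw2, Fw, F0, Fw, Fw, F1],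
   [Fw, F0, F0, F0, Fw, F1, F0, Fw2, F0, Fw2, Fw, F1],
   [F1, F1, F1, F0, Fw, F1, F1, Fw, Fw, F1, Fw, Fw2],
   [F1, F0, Fw, F1, F1, F0, Fw, Fw, F1, Fw2, F0, Fw],
   [F1, Fw2, Fw, Fw, F0, F1, F1, F1, Fw, Fw, Fw2, F1],
   [Fw2, Fw2, F0, Fw, F0, Fw2, F0, Fw2, F0, Fw, F1, F0],
   [Fw2, F0, F0, Fw, F1, F1, F0, Fw, F1, F0, F1, F0],
   [Fw, F0, F1, Fw, F1, Fw, F0, Fw, Fw, F0, Fw, Fw],
   [F0, Fw, F0, F0, F1, Fw, F1, Fw, F0, Fw, Fw, F0]]"

lemma certifies_A765: "certifies 765 A765"
  unfolding A765_def by code_simp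

definition A792 :: "F4 list list" where
  "A792 = [[F1, Fw2, F1, Fw2, F1, Fw2, F1, F1, F1, Fw, Fw2, F0],
   [Fw2, Fw2, F0, Fw2, F0, F0, F1, F1, F0, F0, Fw, F1],
   [Fw2, F0, F0, F0, F1, Fw2, F1, F1, Fw2, F0, F0, F1],
   [F0, Fw2, F1, Fw2, F0, F1, Fw2, Fw, F0, F1, Fw2, Fw2],
   [Fw, Fw2, F1, F1, F0, F1, F0, F1, Fw, F0, Fw2, Fw2],
   [Fw2, Fw2, F0, Fw2, F0, F1, Fw, Fw2, F0, Fw, Fw2, Fw],
   [F0, Fw2, Fw2, Fw, Fw2, F0, Fw, F0, F1, F1, F1, Fw2],
   [F1, F0, Fw, F0, Fw, F0, Fw2, F0, F1, F1, F0, F1],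
   [F0, Fw2, F1, F1, F1, F1, F1, Fw, Fw, Fw2, F1, Fw2],
   [F0, Fw, Fw, F1, F0, Fw2, Fw2, F0, F0, Fw, F0, Fw],
   [Fw, Fw, F0, F0, Fw, F1, Fw, F1, F0, F0, F1, F0],
   [F0, F0, F0, Fw2, Fw2, F1, Fw2, Fw2, Fw2, F0, Fw, F0]]"

lemma certifies_A792: "certifies 792 A792"
  unfolding A792_def by code_simp

definition A837 :: "F4 list list" where
  "A837 = [[Fw, F0, Fw2, Fw2, F1, F1, Fw, Fw2, F1, Fw, Fw, Fw],
   [F0, Fw2, Fw2, Fw, F0, Fw, Fw2, F1, Fw, F1, F0, Fw],
   [F0, F0, F0, F1, Fw2, F1, Fw, Fw, F0, F1, Fw, F0],
   [F0, F0, F0, Fw2, F1, F0, Fw, F1, Fw2, Fw, Fw, F0],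
   [F0, F1, F0, F1, F0, F0, F1, Fw2, Fw2, Fw, Fw2, F0],
   [Fw2, Fw, Fw, Fw, F0, F0, Fw, F0, F0, Fw2, F0, Fw],
   [Fw2, F0, F0, F0, Fw2, F1, Fw, Fw2, Fw2, Fw, Fw, F1],
   [F1, F0, Fw, Fw, F1, Fw2, F0, F0, F0, Fw2, F0, F1],
   [Fw2, Fw, Fw2, Fw, F0, Fw, Fw2, Fw, F1, F1, Fw2, F1],
   [F1, Fw2, F0, F1, Fw2, F1, Fw, F0, F0, F0, F0, Fw2],
   [F0, Fw, Fw, Fw2, Fw, F0, F1, F0, F1, Fw2, F0, F0],
   [Fw2, Fw, F1, Fw2, F0, F0, F1, F0, F0, F1, Fw, F0]]"

lemma certifies_A837: "certifies 837 A837"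
  unfolding A837_def by code_simp

definition A846 :: "F4 list list" where
  "A846 = [[Fw, Fw2, Fw, F0, Fw, F0, Fw2, Fw2, F0, F0, F1, F0],
   [Fw, F1, F1, Fw2, Fw2, F1, F0, Fw, Fw2, Fw2, F1, Fw2],
   [F0, Fw2, Fw2, Fw2, F1, F1, Fw2, F1, F1, Fw, Fw2, Fw],
   [Fw2, Fw2, Fw, Fw, F1, Fw, F1, Fw, F0, Fw2, F0, F0],
   [Fw2, Fw, F0, F1, Fw, F0, Fw, F0, F1, Fw2, Fw2, Fw2],
   [F0, F1, F0, Fw, F1, F0, Fw2, F1, Fw2, F1, Fw, F1],
   [F0, F1, Fw, Fw2, F1, F0, Fw2, F1, F0, F0, Fw2, F0],
   [Fw2, Fw, F0, Fw2, Fw, F1, Fw2, F1, Fw2, Fw2, Fw2, Fw],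
   [Fw2, F0, Fw, Fw2, F1, Fw2, Fw, Fw, Fw, F1, F0, F0],
   [F1, Fw, F0, Fw2, Fw, Fw, F0, Fw, F0, Fw2, Fw, Fw],
   [Fw, Fw, Fw2, Fw, Fw, F0, Fw, Fw2, F0, Fw2, Fw2, F0],
   [Fw2, Fw, F0, Fw2, F0, Fw2, F0, Fw2, F1, F0, F0, F1]]"

lemma certifies_A846: "certifies 846 A846"
  unfolding A846_def by code_simp

definition A864 :: "F4 list list" where
  "A864 = [[Fw, Fw2, Fw, Fw, Fw2, Fw, F1, F0, F0, Fw, F0, F1],
   [F0, F1, F0, F0, F0, Fw2, Fw2, Fw, F1, F1, Fw2, F0],
   [F1, Fw2, F0, Fw2, Fw, Fw, F0, Fw2, F1, F0, Fw, Fw],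
   [F1, Fw2, F1, Fw2, Fw2, F0, F1, Fw, Fw2, Fw, Fw2, Fw],
   [F1, F1, F1, Fw2, F1, Fw, F1, F0, Fw, F1, Fw, F1],
   [F0, F1, Fw, F0, F1, Fw2, Fw, Fw, F0, Fw, F0, F0],
   [F1, Fw2, Fw2, F0, F0, Fw2, Fw2, F0, F0, Fw2, F0, Fw2],
   [F0, Fw2, Fw2, Fw2, Fw2, Fw2, Fw2, F1, Fw, Fw2, Fw2, Fw2],
   [F0, F0, Fw2, Fw2, F1, F1, F0, F0, Fw, Fw, F1, F0],
   [F0, Fw, F1, F0, F1, F1, F0, F1, F1, Fw, F0, F0],
   [F1, Fw, Fw, Fw, Fw, Fw2, Fw2, F0, F0, Fw2, Fw2, F0],
   [F1, Fw, F0, F0, F0, F1, Fw2, F1, F0, Fw, F0, F1]]"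

lemma certifies_A864: "certifies 864 A864"
  unfolding A864_def by code_simp

definition A900 :: "F4 list list" where
  "A900 = [[Fw, Fw, Fw, Fw, Fw2, F0, Fw2, F0, F1, F1, F0, F1],
   [F0, F1, Fw2, F1, Fw2, Fw2, Fw, F1, Fw2, F0, F0, Fw2],
   [Fw2, Fw2, F1, F0, Fw, F0, Fw2, F0, F1, F1, F1, F1],
   [F1, Fw2, F1, F0, F0, F0, F1, Fw, Fw2, F0, F0, Fw2],
   [F0, F1, Fw, F1, Fw2, F1, F1, F1, Fw2, Fw2, Fw, Fw],
   [F1, F0, F0, Fw2, F0, F1, F0, F0, F1, Fw, Fw2, Fw],
   [Fw2, Fw2, Fw, F1, Fw2, F1, F1, F0, F1, Fw, Fw2, Fw],
   [F1, F0, F0, F1, F0, Fw2, F0, Fw2, Fw, Fw, Fw, F0],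
   [F0, F0, Fw, F0, Fw, F0, Fw, Fw2, Fw2, F0, F1, Fw],
   [F1, Fw, F1, F1, F0, F0, F0, F1, Fw2, Fw, Fw, Fw2],
   [F0, F0, F0, Fw2, Fw2, Fw2, Fw2, F1, Fw2, Fw, F1, Fw2],
   [F0, F0, F1, Fw, F0, F1, Fw, F0, F0, Fw2, Fw2, Fw]]"

lemma certifies_A900: "certifies 900 A900"
  unfolding A900_def by code_simp

definition A954 :: "F4 list list" where
  "A954 = [[Fw, Fw, Fw2, Fw2, Fw2, Fw2, F1, Fw2, Fw2, F1, Fw, F0],
   [Fw2, Fw, Fw, F1, Fw, Fw, Fw2, F1, Fw2, F1, F1, F0],
   [F0, Fw, Fw, F0, F1, Fw2, F0, Fw2, F1, F1, F1, Fw2],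
   [F0, F1, F1, Fw2, Fw, F1, F0, Fw, F0, F0, Fw2, F0],
   [Fw, F0, F1, F0, Fw2, F0, F1, Fw2, Fw, Fw2, Fw2, Fw],
   [F0, Fw, F1, F0, Fw2, Fw2, F1, F0, F1, Fw2, F1, Fw],
   [F1, Fw2, F0, F0, F1, F0, F0, F1, F1, Fw, Fw, F0],
   [Fw2, F1, F1, Fw2, F0, F0, Fw, F1, F0, F1, F1, F1],
   [Fw2, Fw2, Fw2, Fw, F0, F0, Fw2, Fw, F0, F1, F1, Fw],
   [F0, Fw2, F1, F0, F0, F0, F1, Fw, F0, Fw2, Fw, Fw],
   [F0, Fw2, Fw2, Fw, Fw, Fw2, Fw2, Fw, F0, Fw, F0, F1],
   [F1, Fw, F1, Fw, Fw, F1, Fw2, Fw, Fw2, F1, Fw2, F0]]"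

lemma certifies_A954: "certifies 954 A954"
  unfolding A954_def by code_simp

definition A981 :: "F4 list list" where
  "A981 = [[F0, Fw, Fw2, Fw2, F1, F1, Fw2, Fw, Fw2, Fw, Fw, Fw],
   [Fw, Fw2, F0, F1, F1, F0, Fw, Fw2, F1, Fw, F0, F1],
   [Fw2, F1, F1, Fw, F1, Fw2, Fw2, Fw2, Fw, F1, F0, F1],
   [F1, Fw2, Fw2, F0, F0, F1, Fw, F0, F0, F0, F1, Fw2],
   [Fw2, Fw, F0, F0, F0, F0, Fw, F0, Fw2, Fw2, Fw2, F1],
   [F0, Fw, F0, F0, F0, Fw2, F1, F0, Fw, F1, F1, F1],
   [F1, Fw2, F1, Fw, F1, F0, Fw2, F0, F0, F1, F0, F0],
   [F0, Fw, Fw2, F0, F1, Fw, F1, F1, Fw2, Fw2, F0, Fw],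
   [Fw, F1, Fw, F1, F1, F1, F1, F0, Fw2, Fw, Fw, Fw],
   [Fw, F0, Fw, Fw2, F1, F1, F1, Fw2, F0, F1, F0, Fw],
   [Fw2, F0, F0, Fw, F0, F1, F0, F1, Fw2, Fw, Fw, F0],
   [Fw2, F0, F0, F0, F0, F1, F1, Fw, F1, F1, F1, F0]]"

lemma certifies_A981: "certifies 981 A981"
  unfolding A981_def by code_simp

definition A1026 :: "F4 list list" where
  "A1026 = [[Fw, F1, Fw, F0, Fw2, Fw2, Fw2, Fw, F1, Fw, Fw, Fw],
   [F1, F0, F1, F0, F0, F1, F0, F0, F1, F1, F1, F1],
   [F0, Fw, Fw2, Fw, F0, F0, Fw, F1, F1, F1, Fw, F1],
   [Fw2, F0, Fw2, F0, Fw2, Fw2, Fw, Fw, F0, Fw, Fw2, Fw],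
   [F1, F0, F1, F1, F1, F0, F1, F0, F0, F0, F1, F1],
   [Fw, F0, F1, Fw, Fw, F1, F0, F1, Fw2, Fw, F0, Fw2],
   [F0, F1, F1, F0, F1, F1, F1, F0, F0, F1, F1, F0],
   [Fw, Fw2, F1, Fw2, F1, Fw, F1, Fw, F0, F1, F1, F1],
   [Fw, Fw2, Fw2, F0, Fw, F0, Fw, F0, Fw, Fw, Fw, Fw2],
   [F1, Fw2, Fw, Fw2, F0, F1, Fw, F1, F1, F1, Fw2, F1],
   [F0, Fw, Fw, Fw, F1, F1, Fw, F0, F1, F1, Fw2, F0],
   [F1, F0, F0, F1, F1, F1, F0, F1, F0, F1, F1, F0]]"

lemma certifies_A1026: "certifies 1026 A1026"
  unfolding A1026_def by code_simp

definition A1089 :: "F4 list list" where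
  "A1089 = [[F0, F1, F1, Fw, Fw, Fw2, Fw, F0, Fw2, Fw, F0, Fw],
   [F0, Fw, F0, Fw2, Fw, Fw2, Fw2, Fw, Fw2, Fw2, F0, Fw],
   [F0, Fw, F1, F0, F0, F0, F1, Fw2, F0, F1, F1, F1],
   [F1, Fw, F1, Fw, Fw2, Fw2, Fw2, Fw, Fw, Fw, F0, Fw],
   [F1, F0, F0, Fw2, Fw, Fw2, Fw, F1, Fw, Fw, F0, Fw],
   [F1, F0, F1, Fw2, Fw2, Fw, Fw2, F1, Fw, Fw, F1, Fw2],
   [F0, Fw, F1, Fw, Fw, Fw, Fw2, Fw, Fw2, Fw, F1, Fw2],
   [F1, Fw2, F0, Fw2, Fw2, Fw2, Fw2, Fw2, Fw, Fw2, F1, Fw],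
   [F1, F0, F1, Fw, Fw, Fw2, Fw2, F1, Fw2, Fw2, F1, Fw],
   [F0, F1, F0, F0, F1, F1, F0, F1, F0, F1, F1, F1],
   [F1, Fw, F0, F0, F1, F1, F1, Fw2, F0, F0, F1, F0],
   [F1, Fw2, F1, Fw2, Fw, Fw2, Fw2, Fw2, Fw2, Fw, F0, Fw2]]"

lemma certifies_A1089: "certifies 1089 A1089"
  unfolding A1089_def by code_simp

definition A1197 :: "F4 list list" where
  "A1197 = [[F1, F0, F0, F1, F0, F1, F1, F1, F1, F1, F0, F0],
   [Fw2, Fw2, F1, Fw, F1, F0, F1, Fw, F0, Fw, Fw, F0],
   [F0, F1, F0, F1, F1, F1, F0, F1, F0, F1, F0, F1],
   [F1, F1, F1, F1, F1, F0, F0, F1, F1, F0, F0, F0],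
   [F1, F1, F1, F0, F1, F0, F0, F0, F0, F1, F1, F1],
   [F0, F0, F0, F0, F1, F1, F1, F0, F1, F1, F1, F1],
   [F0, F1, F1, F0, F0, F1, F0, F1, F1, F1, F1, F0],
   [F1, F1, F0, F1, F0, F1, F0, F0, F1, F0, F1, F1],
   [Fw2, F1, F1, Fw, Fw2, F0, F1, F0, Fw, Fw, F0, Fw],
   [F1, F0, F1, F1, F1, F1, F1, F0, F0, F0, F0, F1],
   [F1, F1, F0, F0, F1, F1, F1, F1, F0, F0, F1, F0],
   [F1, Fw2, F1, F0, Fw2, F0, F1, Fw, Fw, F0, Fw, Fw]]"

lemma certifies_A1197: "certifies 1197 A1197"
  unfolding A1197_def by code_simp

definition A1242 :: "F4 list list" where
  "A1242 = [[Fw, Fw, F0, Fw, F1, F0, Fw, F1, Fw, F0, Fw2, Fw2],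
   [F0, F1, Fw, F1, F0, Fw2, Fw2, F0, F0, F1, F1, F0],
   [F1, F0, Fw2, F1, F0, Fw, Fw2, F0, F0, F1, F0, F1],
   [Fw2, Fw, F0, Fw2, F1, F1, Fw, Fw2, Fw2, Fw2, Fw2, Fw2],
   [F0, F0, Fw, F1, F0, Fw, F1, F0, F0, Fw, Fw2, Fw2],
   [F0, F1, F0, F0, F1, F0, Fw, Fw, F1, F0, Fw, Fw2],
   [Fw2, Fw2, F0, Fw, F1, F1, Fw, Fw, Fw, Fw, Fw, Fw2],
   [F0, F0, F1, F0, F0, F1, F1, Fw2, F0, Fw, F1, F1],
   [F0, F1, F1, F1, F1, F0, F0, Fw, F1, Fw2, F0, F0],
   [Fw2, Fw, F0, Fw, F1, F0, F0, Fw2, Fw2, F0, F0, F1],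
   [Fw, Fw, Fw2, Fw, F0, Fw2, Fw2, F1, Fw2, Fw, F0, F0],
   [F1, F1, F1, F0, F1, F0, F0, Fw2, F0, Fw, F0, F1]]"

lemma certifies_A1242: "certifies 1242 A1242"
  unfolding A1242_def by code_simp

definition A1413 :: "F4 list list" where
  "A1413 = [[F0, F1, F0, F1, Fw2, F1, Fw2, Fw2, Fw2, Fw2, F0, Fw2],
   [F1, F1, F1, F0, F0, F1, F1, F0, F1, F0, F1, F0],
   [F1, F1, F1, F1, Fw, F0, Fw, Fw, Fw, Fw, F1, Fw],
   [Fw2, F1, Fw2, F0, F0, Fw, Fw2, Fw2, F0, Fw, F0, F0],
   [Fw, F1, Fw2, F0, Fw, Fw, F1, F0, Fw, F0, F1, Fw2],
   [F0, F0, F0, F1, Fw2, F1, Fw, Fw2, Fw, Fw, F1, Fw],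
   [F1, F0, F0, F1, F0, F1, F1, F0, F1, F1, F0, F1],
   [Fw, F1, Fw2, F0, F0, Fw, Fw, Fw, F1, Fw2, F1, F0],
   [Fw2, F1, Fw2, F0, Fw2, Fw, F0, F0, Fw2, F0, F0, Fw],
   [Fw, F0, Fw2, F1, Fw2, Fw, F0, F0, Fw, F1, F1, Fw],
   [F0, F0, F1, F1, F1, F1, F0, F1, F0, F1, F0, F1],
   [Fw, F0, Fw2, F1, F0, Fw, Fw, Fw2, F0, Fw, F1, F1]]"

lemma certifies_A1413: "certifies 1413 A1413"
  unfolding A1413_def by code_simp

definition A2277 :: "F4 list list" where
  "A2277 = [[F0, F1, F1, F1, F0, F1, F0, F1, F0, F1, F1, F0],
   [F1, F1, F1, F0, F0, F1, F1, F1, F1, F0, F0, F0],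
   [F1, F0, F0, F1, F1, F1, F0, F1, F1, F0, F1, F0],
   [F1, F1, F0, F0, F1, F1, F0, F1, F0, F1, F0, F1],
   [F1, F0, F1, F0, F1, F0, F1, F1, F0, F1, F1, F0],
   [F1, F0, F1, F1, F0, F0, F0, F1, F1, F1, F0, F1],
   [F0, F0, F1, F1, F1, F1, F1, F1, F0, F0, F0, F1],
   [F0, F0, F0, F0, F0, F1, F1, F1, F1, F1, F1, F1],
   [F0, F1, F1, F0, F1, F0, F0, F1, F1, F0, F1, F1],
   [F1, F1, F0, F1, F0, F0, F1, F1, F0, F0, F1, F1],
   [F1, F1, F1, F1, F1, F1, F1, F0, F1, F1, F1, F1],
   [F0, F1, F0, F1, F1, F0, F1, F1, F1, F1, F0, F0]]"

lemma certifies_A2277: "certifies 2277 A2277"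
  unfolding A2277_def by code_simp

theorem proposition5p3:
  fixes \<alpha> :: int
  assumes "\<alpha> \<in> (\<lambda>\<beta>. 9 * \<beta>) ` {57,58,60,61,64,66,69,70,73,76,78,82,84,85,88,93,94,96,100,106,109,114,121,133,138,157,253}"
  shows "\<exists>D. near_extremal_24 D \<and>
    weight_enumerator D =
      monom 1 0 + monom \<alpha> 8 + monom (18216 - 8*\<alpha>) 10 + monom (156492 + 28*\<alpha>) 12
      + monom (1147608 - 56*\<alpha>) 14 + monom (3736557 + 70*\<alpha>) 16 + monom (6248088 - 56*\<alpha>) 18
      + monom (4399164 + 28*\<alpha>) 20 + monom (1038312 - 8*\<alpha>) 22 + monom (32778 + \<alpha>) 24"
proof -
  have "\<exists>A. certifies (nat \<alpha>) A"
    using assms certifies_A513 certifies_A522 certifies_A540 certifies_A549 certifies_A576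
      certifies_A594 certifies_A621 certifies_A630 certifies_A657 certifies_A684 certifies_A702
      certifies_A738 certifies_A756 certifies_A765 certifies_A792 certifies_A837 certifies_A846
      certifies_A864 certifies_A900 certifies_A954 certifies_A981 certifies_A1026
      certifies_A1089 certifies_A1197 certifies_A1242 certifies_A1413 certifies_A2277 by auto
  then obtain A where A: "certifies (nat \<alpha>) A" ..
  have \<alpha>: "int (nat \<alpha>) = \<alpha>"
    using assms by auto
  show ?thesis
    using certifies_near_extremal_24[OF A] unfolding near_extremal_enumerator_def \<alpha> by blast
qed

end
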